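(* Let $\widetilde{\mathfrak{a}}$ be an algebra which is free and finite over the DVR $\mathcal{O}$ such that $\widetilde{\mathfrak{a}}_K=K\otimes\widetilde{\mathfrak{a}}$ has a tight grading $\widetilde{\mathfrak{a}}_K=\bigoplus_{n\ge0}\widetilde{\mathfrak{a}}_{K,n}$ and $\widetilde{\mathfrak{a}}$ has a positive grading $\widetilde{\mathfrak{a}}=\bigoplus_{r\ge0}\widetilde{\mathfrak{a}}_r$ with $K\widetilde{\mathfrak{a}}_r=\widetilde{\mathfrak{a}}_{K,r}$ for each $r$. Then: (a) For each $r\in\mathbb{N}$, $\widetilde{\mathfrak{a}}_r=\widetilde{\mathfrak{a}}\cap\widetilde{\mathfrak{a}}_{K,r}$ and $\sum_{i\ge r}\widetilde{\mathfrak{a}}_i=\widetilde{\mathfrak{a}}\cap\operatorname{rad}^r\widetilde{\mathfrak{a}}_K$; and there is an isomorphism of graded $\mathcal{O}$-algebras $\widetilde{\mathfrak{a}}\to\operatorname{gr}\widetilde{\mathfrak{a}}$ sending $x\in\widetilde{\mathfrak{a}}_r$ to its image in $\widetilde{\operatorname{rad}}^r\widetilde{\mathfrak{a}}/\widetilde{\operatorname{rad}}^{r+1}\widetilde{\mathfrak{a}}=(\operatorname{gr}\widetilde{\mathfrak{a}})_r$. (b) For an $\widetilde{\mathfrak{a}}$-lattice $\widetilde{M}$, the following are equivalent: (i) $\widetilde{M}$ is tight; (ii) $\sum_{i\ge r}\widetilde{\mathfrak{a}}_i\widetilde{M}=\widetilde{\operatorname{rad}}^r\widetilde{M}$ for each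 $r\in\mathbb{N}$; (iii) the $\operatorname{gr}\widetilde{\mathfrak{a}}$-lattice $\operatorname{gr}\widetilde{M}$ is generated by $(\operatorname{gr}\widetilde{M})_0$.
   Context: $\mathcal{O}$: DVR with fraction field $K$. A tight grading of the finite-dimensional $K$-algebra $\widetilde{\mathfrak{a}}_K$ is a positive algebra grading with $\widetilde{\mathfrak{a}}_{K,0}$ semisimple and $\widetilde{\mathfrak{a}}_K$ generated as algebra by $\widetilde{\mathfrak{a}}_{K,0}+\widetilde{\mathfrak{a}}_{K,1}$ (equivalently $\widetilde{\mathfrak{a}}_K\cong\operatorname{gr}\widetilde{\mathfrak{a}}_K$ as graded algebras). The grading of $\widetilde{\mathfrak{a}}$ is a grading as $\mathcal{O}$-algebra with $\widetilde{\mathfrak{a}}\subseteq\widetilde{\mathfrak{a}}_K$. $\widetilde{\operatorname{rad}}^r\widetilde{\mathfrak{a}}=\widetilde{\mathfrak{a}}\cap(\operatorname{rad}\widetilde{\mathfrak{a}}_K)^r$, $\operatorname{gr}\widetilde{\mathfrak{a}}=\bigoplus_r\widetilde{\operatorname{rad}}^r\widetilde{\mathfrak{a}}/\widetilde{\operatorname{rad}}^{r+1}\widetilde{\mathfrak{a}}$. An $\widetilde{\mathfrak{a}}$-lattice is an $\mathcal{O}$-finite torsion-free module; $\widetilde{\operatorname{rad}}^r\widetilde{M}=\widetilde{M}\cap(\operatorname{rad}\widetilde{\mathfrak{a}}_K)^r\widetilde{M}_K$, $\operatorname{gr}\widetilde{M}=\bigoplus_r\widetilde{\operatorname{rad}}^r\widetilde{M}/\widetilde{\operatorname{rad}}^{r+1}\widetilde{M}$.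 $\widetilde{M}$ is tight if $\widetilde{\operatorname{rad}}^r\widetilde{M}=(\widetilde{\operatorname{rad}}^r\widetilde{\mathfrak{a}})\widetilde{M}$ for all $r\in\mathbb{N}$. *)

theory Defs
  imports Main
begin

definition coset :: "'v::plus set \<Rightarrow> 'v \<Rightarrow> 'v set" where
  "coset S x = (\<lambda>z. x + z) ` S"

inductive_set addspan :: "'v::ab_group_add set \<Rightarrow> 'v set" for X where
  as_zero: "0 \<in> addspan X"
| as_base: "x \<in> X \<Longrightarrow> x \<in> addspan X"
| as_add: "x \<in> addspan X \<Longrightarrow> y \<in> addspan X \<Longrightarrow> x + y \<in> addspan X"
| as_neg: "x \<in> addspan X \<Longrightarrow> - x \<in> addspan X"

text \<open>Span with coefficients from the scalar set S (e.g. S = Ov or S = UNIV = K).\<close>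
definition lspan :: "('s \<Rightarrow> 'v \<Rightarrow> 'v) \<Rightarrow> 's set \<Rightarrow> 'v set \<Rightarrow> 'v::comm_monoid_add set" where
  "lspan sc S X = {\<Sum>x\<in>F. sc (c x) x | F c. finite F \<and> F \<subseteq> X \<and> (\<forall>x\<in>F. c x \<in> S)}"

definition lin_indep :: "('k::zero \<Rightarrow> 'v \<Rightarrow> 'v) \<Rightarrow> 'v::comm_monoid_add set \<Rightarrow> bool" where
  "lin_indep sc B \<longleftrightarrow> (\<forall>c. (\<Sum>x\<in>B. sc (c x) x) = 0 \<longrightarrow> (\<forall>x\<in>B. c x = 0))"

definition submod :: "('s \<Rightarrow> 'v \<Rightarrow> 'v) \<Rightarrow> 's set \<Rightarrow> 'v::monoid_add set \<Rightarrow> bool" where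
  "submod sc S X \<longleftrightarrow> 0 \<in> X \<and> (\<forall>x\<in>X. \<forall>y\<in>X. x + y \<in> X) \<and> (\<forall>c\<in>S. \<forall>x\<in>X. sc c x \<in> X)"

definition vs_axioms :: "('k::field \<Rightarrow> 'v::ab_group_add \<Rightarrow> 'v) \<Rightarrow> bool" where
  "vs_axioms sc \<longleftrightarrow> (\<forall>x. sc 1 x = x) \<and> (\<forall>a b x. sc (a * b) x = sc a (sc b x))
     \<and> (\<forall>a b x. sc (a + b) x = sc a x + sc b x) \<and> (\<forall>a x y. sc a (x + y) = sc a x + sc a y)"

definition kalg :: "('k::field \<Rightarrow> 'a::ring_1 \<Rightarrow> 'a) \<Rightarrow> bool" where
  "kalg sc \<longleftrightarrow> vs_axioms sc \<and> (\<forall>a x y. sc a (x * y) = sc a x * y \<and> sc a (x * y) = x * sc a y)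
     \<and> (\<exists>B. finite B \<and> lspan sc UNIV B = UNIV)"

definition kmod :: "('k::field \<Rightarrow> 'a::ring_1 \<Rightarrow> 'a) \<Rightarrow> ('k \<Rightarrow> 'm::ab_group_add \<Rightarrow> 'm)
    \<Rightarrow> ('a \<Rightarrow> 'm \<Rightarrow> 'm) \<Rightarrow> bool" where
  "kmod sc scm act \<longleftrightarrow> vs_axioms scm \<and> (\<forall>m. act 1 m = m) \<and> (\<forall>x y m. act (x * y) m = act x (act y m))
     \<and> (\<forall>x y m. act (x + y) m = act x m + act y m) \<and> (\<forall>x m n. act x (m + n) = act x m + act x n)
     \<and> (\<forall>c x m. act (sc c x) m = scm c (act x m)) \<and> (\<forall>c x m. act x (scm c m) = scm c (act x m))"

definition dvr :: "'k::field set \<Rightarrow> bool" where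
  "dvr Ov \<longleftrightarrow> 1 \<in> Ov \<and> (\<forall>x\<in>Ov. \<forall>y\<in>Ov. x + y \<in> Ov \<and> x * y \<in> Ov \<and> - x \<in> Ov)
     \<and> (\<exists>p\<in>Ov. p \<noteq> 0 \<and> inverse p \<notin> Ov \<and>
          (\<forall>x. x \<noteq> 0 \<longrightarrow> (\<exists>u n. u \<in> Ov \<and> inverse u \<in> Ov \<and> (x = u * p ^ n \<or> x = u * inverse (p ^ n)))))"

definition graded_ds :: "(nat \<Rightarrow> 'v::comm_monoid_add set) \<Rightarrow> 'v set \<Rightarrow> bool" where
  "graded_ds G V \<longleftrightarrow> (\<forall>n. G n \<subseteq> V) \<and>
     (\<forall>x\<in>V. \<exists>!f. (\<forall>n. f n \<in> G n) \<and> finite {n. f n \<noteq> 0} \<and> x = sum f {n. f n \<noteq> 0})"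

inductive_set alg_gen :: "('k \<Rightarrow> 'a::ring_1 \<Rightarrow> 'a) \<Rightarrow> 'a set \<Rightarrow> 'a set" for sc X where
  ag_base: "x \<in> X \<Longrightarrow> x \<in> alg_gen sc X"
| ag_one: "1 \<in> alg_gen sc X"
| ag_sc: "x \<in> alg_gen sc X \<Longrightarrow> sc c x \<in> alg_gen sc X"
| ag_add: "x \<in> alg_gen sc X \<Longrightarrow> y \<in> alg_gen sc X \<Longrightarrow> x + y \<in> alg_gen sc X"
| ag_mul: "x \<in> alg_gen sc X \<Longrightarrow> y \<in> alg_gen sc X \<Longrightarrow> x * y \<in> alg_gen sc X"

definition jrad :: "'a::ring_1 set" where
  "jrad = {x. \<forall>y. \<exists>z. z * (1 - y * x) = 1}"

definition semisimple_sub :: "'a::ring_1 set \<Rightarrow> bool" where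
  "semisimple_sub R \<longleftrightarrow> (\<forall>x\<in>R. (\<forall>y\<in>R. \<exists>z\<in>R. z * (1 - y * x) = 1) \<longrightarrow> x = 0)"

primrec idpow :: "'a::ring_1 set \<Rightarrow> nat \<Rightarrow> 'a set" where
  "idpow J 0 = UNIV"
| "idpow J (Suc r) = addspan {x * y | x y. x \<in> J \<and> y \<in> idpow J r}"

definition tight_grading :: "('k::field \<Rightarrow> 'a::ring_1 \<Rightarrow> 'a) \<Rightarrow> (nat \<Rightarrow> 'a set) \<Rightarrow> bool" where
  "tight_grading sc G \<longleftrightarrow> (\<forall>n. submod sc UNIV (G n)) \<and> graded_ds G UNIV
     \<and> (\<forall>i j. \<forall>x\<in>G i. \<forall>y\<in>G j. x * y \<in> G (i + j)) \<and> 1 \<in> G 0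
     \<and> semisimple_sub (G 0) \<and> alg_gen sc (G 0 \<union> G 1) = UNIV"

definition sumge :: "(nat \<Rightarrow> 'v::comm_monoid_add set) \<Rightarrow> nat \<Rightarrow> 'v set" where
  "sumge G r = {sum f F | F f. finite F \<and> (\<forall>i\<in>F. r \<le> i \<and> f i \<in> G i)}"

definition ratil :: "'a::ring_1 set \<Rightarrow> nat \<Rightarrow> 'a set" where
  "ratil A r = A \<inter> idpow jrad r"

definition radM :: "('a::ring_1 \<Rightarrow> 'm::ab_group_add \<Rightarrow> 'm) \<Rightarrow> 'm set \<Rightarrow> nat \<Rightarrow> 'm set" where
  "radM act M r = M \<inter> addspan {act x m | x m. x \<in> idpow jrad r}"

text \<open>Elements of gr w.r.t. a filtration F: families of cosets c r in F r / F (r+1), almost all zero.\<close>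
definition grcar :: "(nat \<Rightarrow> 'v::ab_group_add set) \<Rightarrow> (nat \<Rightarrow> 'v set) set" where
  "grcar F = {c. (\<forall>r. \<exists>x\<in>F r. c r = coset (F (Suc r)) x) \<and> finite {r. c r \<noteq> F (Suc r)}}"

definition grzero :: "(nat \<Rightarrow> 'v::ab_group_add set) \<Rightarrow> nat \<Rightarrow> 'v set" where
  "grzero F r = F (Suc r)"

definition gradd :: "(nat \<Rightarrow> 'v::ab_group_add set) \<Rightarrow> (nat \<Rightarrow> 'v set) \<Rightarrow> (nat \<Rightarrow> 'v set) \<Rightarrow> nat \<Rightarrow> 'v set" where
  "gradd F c d r = {x + y | x y. x \<in> c r \<and> y \<in> d r}"

text \<open>Action of gr (w.r.t. filtration F of the ring) on gr (w.r.t. filtration G), induced by act.\<close>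
definition gract :: "('a \<Rightarrow> 'v \<Rightarrow> 'v) \<Rightarrow> (nat \<Rightarrow> 'a set) \<Rightarrow> (nat \<Rightarrow> 'v::ab_group_add set)
    \<Rightarrow> (nat \<Rightarrow> 'a set) \<Rightarrow> (nat \<Rightarrow> 'v set) \<Rightarrow> nat \<Rightarrow> 'v set" where
  "gract act F G c d n = {(\<Sum>i\<le>n. act (x i) (y i)) + z | x y z.
       (\<forall>i\<le>n. x i \<in> c i \<and> y i \<in> d (n - i)) \<and> z \<in> G (Suc n)}"

definition grmul :: "(nat \<Rightarrow> 'a::ring_1 set) \<Rightarrow> (nat \<Rightarrow> 'a set) \<Rightarrow> (nat \<Rightarrow> 'a set) \<Rightarrow> nat \<Rightarrow> 'a set" where
  "grmul F = gract (*) F F"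

definition grone :: "(nat \<Rightarrow> 'a::ring_1 set) \<Rightarrow> nat \<Rightarrow> 'a set" where
  "grone F r = coset (F (Suc r)) (if r = 0 then 1 else 0)"

definition grsmul :: "('s \<Rightarrow> 'v \<Rightarrow> 'v) \<Rightarrow> (nat \<Rightarrow> 'v::ab_group_add set) \<Rightarrow> 's \<Rightarrow> (nat \<Rightarrow> 'v set) \<Rightarrow> nat \<Rightarrow> 'v set" where
  "grsmul sc F a c r = {sc a x + z | x z. x \<in> c r \<and> z \<in> F (Suc r)}"

text \<open>The homogeneous element of degree r given by the image of x in F r / F (r+1).\<close>
definition grsingle :: "(nat \<Rightarrow> 'v::ab_group_add set) \<Rightarrow> nat \<Rightarrow> 'v \<Rightarrow> nat \<Rightarrow> 'v set" where
  "grsingle F r x = (\<lambda>n. if n = r then coset (F (Suc n)) x else F (Suc n))"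

inductive_set grspan :: "('a::ab_group_add \<Rightarrow> 'v \<Rightarrow> 'v) \<Rightarrow> (nat \<Rightarrow> 'a set) \<Rightarrow> (nat \<Rightarrow> 'v::ab_group_add set)
    \<Rightarrow> (nat \<Rightarrow> 'v set) set \<Rightarrow> (nat \<Rightarrow> 'v set) set" for act F G S where
  gs_base: "d \<in> S \<Longrightarrow> d \<in> grspan act F G S"
| gs_zero: "grzero G \<in> grspan act F G S"
| gs_add: "c \<in> grspan act F G S \<Longrightarrow> d \<in> grspan act F G S \<Longrightarrow> gradd G c d \<in> grspan act F G S"
| gs_act: "c \<in> grcar F \<Longrightarrow> d \<in> grspan act F G S \<Longrightarrow> gract act F G c d \<in> grspan act F G S"

text \<open>An A-lattice M inside the K-vector space 'm = K \<otimes> M.\<close>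
definition is_lattice :: "'k set \<Rightarrow> ('k \<Rightarrow> 'm::ab_group_add \<Rightarrow> 'm) \<Rightarrow> ('a \<Rightarrow> 'm \<Rightarrow> 'm) \<Rightarrow> 'a set \<Rightarrow> 'm set \<Rightarrow> bool" where
  "is_lattice Ov scm act A M \<longleftrightarrow> submod scm Ov M \<and> (\<forall>x\<in>A. \<forall>m\<in>M. act x m \<in> M)
     \<and> (\<exists>G. finite G \<and> M = lspan scm Ov G) \<and> lspan scm UNIV M = UNIV"

definition tight_lattice :: "('a::ring_1 \<Rightarrow> 'm::ab_group_add \<Rightarrow> 'm) \<Rightarrow> 'a set \<Rightarrow> 'm set \<Rightarrow> bool" where
  "tight_lattice act A M \<longleftrightarrow>
     (\<forall>r. radM act M r = addspan {act x m | x m. x \<in> ratil A r \<and> m \<in> M})"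

end

theory Submission
  imports Defs
begin

text \<open>
  The Jacobson
  radical of \<open>K \<otimes> A\<close> is its part of positive degree (the degree-0 part is semisimple, the
  positive part is nilpotent), and since the algebra is generated in degrees 0 and 1, its \<open>r\<close>-th
  power is the sum of the components of degree \<open>\<ge> r\<close>. As \<open>K A\<^sub>r = (K \<otimes> A)\<^sub>r\<close>, the
  homogeneous components of an element of \<open>A\<close> lie in \<open>A\<close>, which gives (a); the isomorphism
  sends \<open>x\<close> to the classes of its homogeneous components.

  For (b), \<open>\<Sum>\<^sub>i\<^sub>\<ge>\<^sub>r A\<^sub>i M\<close> always lies in \<open>rad\<^sup>r M\<close>, and its image in degree \<open>r\<close> of
  \<open>gr M\<close> is exactly the degree-\<open>r\<close> part of the submodule generated by \<open>(gr M)\<^sub>0\<close>. So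
  equality in every degree gives generation in degree 0, and conversely generation in degree 0
  lifts to equality by descending induction on \<open>r\<close>, starting above the top degree where both
  sides vanish.
\<close>

definition add_subgroup :: "'v::ab_group_add set \<Rightarrow> bool" where
  "add_subgroup S \<longleftrightarrow> 0 \<in> S \<and> (\<forall>x\<in>S. \<forall>y\<in>S. x + y \<in> S) \<and> (\<forall>x\<in>S. - x \<in> S)"

lemma add_subgroupD:
  assumes "add_subgroup S"
  shows "0 \<in> S" "x \<in> S \<Longrightarrow> y \<in> S \<Longrightarrow> x + y \<in> S" "x \<in> S \<Longrightarrow> - x \<in> S"
    "x \<in> S \<Longrightarrow> y \<in> S \<Longrightarrow> x - y \<in> S"
proof -
  have h: "0 \<in> S" "\<forall>x\<in>S. \<forall>y\<in>S. x + y \<in> S" "\<forall>x\<in>S. - x \<in> S"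
    using assms unfolding add_subgroup_def by blast+
  show "0 \<in> S" by (rule h(1))
  show "x \<in> S \<Longrightarrow> y \<in> S \<Longrightarrow> x + y \<in> S" using h(2) by blast
  show "x \<in> S \<Longrightarrow> - x \<in> S" using h(3) by blast
  assume "x \<in> S" "y \<in> S"
  then have "x + (- y) \<in> S" using h(2,3) by blast
  then show "x - y \<in> S" by simp
qed

lemma add_subgroup_sum:
  assumes "add_subgroup S" "\<forall>i\<in>I. f i \<in> S"
  shows "sum f I \<in> S"
  using assms(2)
proof (induction I rule: infinite_finite_induct)
  case (infinite A) then show ?case using add_subgroupD(1)[OF assms(1)] by simp
next
  case empty then show ?case using add_subgroupD(1)[OF assms(1)] by simp
next
  case (insert x F) then show ?case using add_subgroupD(2)[OF assms(1)] by simp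
qed

lemma add_subgroup_Int: "add_subgroup S \<Longrightarrow> add_subgroup T \<Longrightarrow> add_subgroup (S \<inter> T)"
  unfolding add_subgroup_def by auto

lemma add_subgroup_addspan: "add_subgroup (addspan X)"
  unfolding add_subgroup_def by (auto intro: addspan.intros)

lemma addspan_sub:
  assumes "add_subgroup S" "X \<subseteq> S"
  shows "addspan X \<subseteq> S"
proof
  fix z assume "z \<in> addspan X"
  then show "z \<in> S"
    by induction (use assms add_subgroupD[OF assms(1)] in auto)
qed

lemma addspan_mono: "X \<subseteq> Y \<Longrightarrow> addspan X \<subseteq> addspan Y"
  by (rule addspan_sub[OF add_subgroup_addspan]) (auto intro: addspan.intros)

lemma addspan_map:
  assumes add: "\<And>x y. f (x + y) = f x + f y"
    and base: "\<And>x. x \<in> X \<Longrightarrow> f x \<in> addspan Y"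
    and z: "z \<in> addspan X"
  shows "f z \<in> addspan Y"
proof -
  have f0: "f 0 = 0" using add[of 0 0] by simp
  have fneg: "f (- x) = - f x" for x
  proof -
    have "f x + f (-x) = 0" using add[of x "-x"] f0 by simp
    then show ?thesis by (metis add.inverse_unique)
  qed
  from z show ?thesis
    by induction (auto simp: f0 fneg add base intro: addspan.intros)
qed

lemma addspan_sum: "finite I \<Longrightarrow> \<forall>i\<in>I. f i \<in> addspan X \<Longrightarrow> sum f I \<in> addspan X"
  using add_subgroup_sum[OF add_subgroup_addspan] by blast

lemma addspan_zero_set: "z \<in> addspan {0} \<Longrightarrow> z = 0"
  by (induction rule: addspan.induct) auto

lemma mem_coset: "x \<in> coset (S::'v::ab_group_add set) a \<longleftrightarrow> x - a \<in> S"
  unfolding coset_def image_iff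
proof
  assume "\<exists>z\<in>S. x = a + z"
  then obtain z where "z \<in> S" "x = a + z" by blast
  then show "x - a \<in> S" by simp
next
  assume "x - a \<in> S"
  moreover have "x = a + (x - a)" by simp
  ultimately show "\<exists>z\<in>S. x = a + z" by blast
qed

lemma coset_eq_iff:
  assumes "add_subgroup S"
  shows "coset S a = coset S b \<longleftrightarrow> a - b \<in> S"
proof
  assume "coset S a = coset S b"
  moreover have "a \<in> coset S a" using add_subgroupD(1)[OF assms] by (simp add: mem_coset)
  ultimately show "a - b \<in> S" by (simp add: mem_coset)
next
  assume h: "a - b \<in> S"
  show "coset S a = coset S b"
  proof (rule set_eqI)
    fix x
    have e1: "x - a = (x - b) - (a - b)" and e2: "x - b = (x - a) + (a - b)" by simp_all
    show "x \<in> coset S a \<longleftrightarrow> x \<in> coset S b"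
      unfolding mem_coset
    proof
      assume "x - a \<in> S" then show "x - b \<in> S" unfolding e2 using add_subgroupD(2)[OF assms _ h] by blast
    next
      assume "x - b \<in> S" then show "x - a \<in> S" unfolding e1 using add_subgroupD(4)[OF assms _ h] by blast
    qed
  qed
qed

lemma coset_zero: "coset (S::'v::monoid_add set) 0 = S"
proof -
  have "(\<lambda>z. 0 + z) = (\<lambda>z::'v. z)" by (rule ext) simp
  then show ?thesis unfolding coset_def by simp
qed

lemma coset_add:
  assumes "add_subgroup S"
  shows "{x + y | x y. x \<in> coset S a \<and> y \<in> coset S b} = coset S (a + b)"
proof (rule set_eqI)
  fix z
  show "z \<in> {x + y | x y. x \<in> coset S a \<and> y \<in> coset S b} \<longleftrightarrow> z \<in> coset S (a + b)"
  proof
    assume "z \<in> {x + y | x y. x \<in> coset S a \<and> y \<in> coset S b}"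
    then obtain x y where z: "z = x + y" and xy: "x \<in> coset S a" "y \<in> coset S b" by blast
    have xy': "x - a \<in> S" "y - b \<in> S" using xy unfolding mem_coset by auto
    have eq: "z - (a + b) = (x - a) + (y - b)" unfolding z by (simp add: algebra_simps)
    have "z - (a + b) \<in> S" unfolding eq by (rule add_subgroupD(2)[OF assms xy'])
    then show "z \<in> coset S (a + b)" unfolding mem_coset .
  next
    assume "z \<in> coset S (a + b)"
    then have A: "z - (a + b) \<in> S" unfolding mem_coset .
    have B: "z - b - a = z - (a + b)" by (simp add: algebra_simps)
    have h1: "z - b \<in> coset S a" unfolding mem_coset B by (rule A)
    have h2: "b \<in> coset S b" unfolding mem_coset using add_subgroupD(1)[OF assms] by simp
    have "z = (z - b) + b" by simp
    with h1 h2 show "z \<in> {x + y | x y. x \<in> coset S a \<and> y \<in> coset S b}"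
      by (intro CollectI exI[of _ "z - b"] exI[of _ b]) simp
  qed
qed

lemma additive_image_coset:
  assumes S: "add_subgroup S" and fS: "\<And>u. u \<in> S \<Longrightarrow> f u \<in> S" and fadd: "\<And>u v. f (u + v) = f u + f v"
  shows "{f z + w | z w. z \<in> coset S a \<and> w \<in> S} = coset S (f a)"
proof (rule set_eqI)
  fix v
  show "v \<in> {f z + w | z w. z \<in> coset S a \<and> w \<in> S} \<longleftrightarrow> v \<in> coset S (f a)"
  proof
    assume "v \<in> {f z + w | z w. z \<in> coset S a \<and> w \<in> S}"
    then obtain z w where v: "v = f z + w" and z: "z - a \<in> S" and w: "w \<in> S"
      unfolding mem_coset by blast
    have "f z = f (z - a) + f a" using fadd[of "z - a" a] by simp
    then have "v - f a = f (z - a) + w" using v by (simp add: algebra_simps)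
    moreover have "f (z - a) + w \<in> S" using add_subgroupD(2)[OF S fS[OF z] w] .
    ultimately show "v \<in> coset S (f a)" unfolding mem_coset by simp
  next
    assume "v \<in> coset S (f a)"
    then have w: "v - f a \<in> S" unfolding mem_coset .
    have z: "a \<in> coset S a" unfolding mem_coset using add_subgroupD(1)[OF S] by simp
    have "v = f a + (v - f a)" by simp
    then show "v \<in> {f z + w | z w. z \<in> coset S a \<and> w \<in> S}" using z w by blast
  qed
qed

text \<open>
  The product in an associated graded object computed on representatives: \<open>err1\<close> and \<open>err2\<close>
  say that changing a representative only changes the product in higher filtration degree.
\<close>

lemma gract_coset:
  fixes act :: "'a::ab_group_add \<Rightarrow> 'v::ab_group_add \<Rightarrow> 'v"
  assumes actl: "\<And>a b m. act (a + b) m = act a m + act b m"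
    and actr: "\<And>a m n. act a (m + n) = act a m + act a n"
    and SG: "add_subgroup (G (Suc n))" "\<And>i. add_subgroup (F i)" "\<And>j. add_subgroup (G j)"
    and c: "\<And>i. i \<le> n \<Longrightarrow> c i = coset (F (Suc i)) (x i)"
    and d: "\<And>i. i \<le> n \<Longrightarrow> d (n - i) = coset (G (Suc (n - i))) (y i)"
    and err1: "\<And>i a b. i \<le> n \<Longrightarrow> a \<in> F (Suc i) \<Longrightarrow> b \<in> coset (G (Suc (n - i))) (y i)
      \<Longrightarrow> act a b \<in> G (Suc n)"
    and err2: "\<And>i b. i \<le> n \<Longrightarrow> b \<in> G (Suc (n - i)) \<Longrightarrow> act (x i) b \<in> G (Suc n)"
  shows "gract act F G c d n = coset (G (Suc n)) (\<Sum>i\<le>n. act (x i) (y i))"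
proof (rule set_eqI)
  fix w
  show "w \<in> gract act F G c d n \<longleftrightarrow> w \<in> coset (G (Suc n)) (\<Sum>i\<le>n. act (x i) (y i))"
  proof
    assume "w \<in> gract act F G c d n"
    then have "\<exists>x' y' z. w = (\<Sum>i\<le>n. act (x' i) (y' i)) + z \<and> (\<forall>i\<le>n. x' i \<in> c i \<and> y' i \<in> d (n - i)) \<and> z \<in> G (Suc n)"
      unfolding gract_def mem_Collect_eq .
    then obtain x' y' z where w: "w = (\<Sum>i\<le>n. act (x' i) (y' i)) + z"
      and xy: "\<forall>i\<le>n. x' i \<in> c i \<and> y' i \<in> d (n - i)" and z: "z \<in> G (Suc n)"
      by (elim exE conjE)
    have e: "act (x' i) (y' i) - act (x i) (y i) \<in> G (Suc n)" if i: "i \<le> n" for i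
    proof -
      have "x' i - x i \<in> F (Suc i)" using xy c i by (simp add: mem_coset)
      have yi: "y' i \<in> coset (G (Suc (n - i))) (y i)" using xy d i by simp
      then have "y' i - y i \<in> G (Suc (n - i))" by (simp add: mem_coset)
      have "act (x' i) (y' i) = act (x' i - x i) (y' i) + act (x i) (y' i - y i) + act (x i) (y i)"
        using actl[of "x' i - x i" "x i" "y' i"] actr[of "x i" "y' i - y i" "y i"] by simp
      then have "act (x' i) (y' i) - act (x i) (y i) = act (x' i - x i) (y' i) + act (x i) (y' i - y i)"
        by simp
      moreover have "act (x' i - x i) (y' i) \<in> G (Suc n)"
        using err1[OF i \<open>x' i - x i \<in> F (Suc i)\<close> yi] .
      moreover have "act (x i) (y' i - y i) \<in> G (Suc n)"
        using err2[OF i \<open>y' i - y i \<in> G (Suc (n - i))\<close>] .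
      ultimately show ?thesis using add_subgroupD(2)[OF SG(1)] by simp
    qed
    have "w - (\<Sum>i\<le>n. act (x i) (y i)) = (\<Sum>i\<le>n. act (x' i) (y' i) - act (x i) (y i)) + z"
      using w by (simp add: sum_subtractf)
    also have "\<dots> \<in> G (Suc n)"
    proof -
      have "(\<Sum>i\<le>n. act (x' i) (y' i) - act (x i) (y i)) \<in> G (Suc n)"
        by (rule add_subgroup_sum[OF SG(1)]) (use e in auto)
      then show ?thesis using z add_subgroupD(2)[OF SG(1)] by blast
    qed
    finally show "w \<in> coset (G (Suc n)) (\<Sum>i\<le>n. act (x i) (y i))" by (simp add: mem_coset)
  next
    assume "w \<in> coset (G (Suc n)) (\<Sum>i\<le>n. act (x i) (y i))"
    then have z: "w - (\<Sum>i\<le>n. act (x i) (y i)) \<in> G (Suc n)" by (simp add: mem_coset)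
    have "\<forall>i\<le>n. x i \<in> c i \<and> y i \<in> d (n - i)"
      using c d add_subgroupD(1)[OF SG(2)] add_subgroupD(1)[OF SG(3)] by (simp add: mem_coset)
    then have "\<exists>x' y' z. w = (\<Sum>i\<le>n. act (x' i) (y' i)) + z \<and> (\<forall>i\<le>n. x' i \<in> c i \<and> y' i \<in> d (n - i)) \<and> z \<in> G (Suc n)"
      using z by (intro exI[of _ x] exI[of _ y] exI[of _ "w - (\<Sum>i\<le>n. act (x i) (y i))"]) simp
    then show "w \<in> gract act F G c d n"
      unfolding gract_def mem_Collect_eq .
  qed
qed

lemma grcarI:
  fixes G :: "nat \<Rightarrow> 'v::ab_group_add set"
  assumes "\<forall>r. \<exists>y\<in>G r. c r = coset (G (Suc r)) y" and "\<forall>r\<ge>N. \<forall>y\<in>G r. y = 0"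
  shows "c \<in> grcar G"
proof -
  have "{r. c r \<noteq> G (Suc r)} \<subseteq> {..<N}"
  proof
    fix r assume r: "r \<in> {r. c r \<noteq> G (Suc r)}"
    show "r \<in> {..<N}"
    proof (rule ccontr)
      assume "r \<notin> {..<N}"
      then have "r \<ge> N" by simp
      moreover obtain y where y: "y \<in> G r" "c r = coset (G (Suc r)) y" using assms(1) by blast
      ultimately have "y = 0" using assms(2) by blast
      then have "c r = G (Suc r)" using y(2) by (simp add: coset_zero)
      then show False using r by simp
    qed
  qed
  then have "finite {r. c r \<noteq> G (Suc r)}" by (rule finite_subset) simp
  then show ?thesis unfolding grcar_def using assms(1) by blast
qed

lemma grcar_reps:
  assumes "c \<in> grcar G"
  obtains ys where "\<And>r. ys r \<in> G r" "\<And>r. c r = coset (G (Suc r)) (ys r)"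
proof -
  have "\<forall>r. \<exists>y. y \<in> G r \<and> c r = coset (G (Suc r)) y" using assms unfolding grcar_def by blast
  then have "\<exists>ys. \<forall>r. ys r \<in> G r \<and> c r = coset (G (Suc r)) (ys r)" by (rule choice)
  then obtain ys where "\<forall>r. ys r \<in> G r \<and> c r = coset (G (Suc r)) (ys r)" by blast
  then show ?thesis using that by blast
qed

lemma grsingle_coset:
  "grsingle G k a = (\<lambda>n. coset (G (Suc n)) (if n = k then a else (0::'v::ab_group_add)))"
  unfolding grsingle_def by (rule ext) (simp add: coset_zero)

lemma gradd_coset:
  assumes "\<And>n. add_subgroup (G (Suc n))"
  shows "gradd G (\<lambda>n. coset (G (Suc n)) (a n)) (\<lambda>n. coset (G (Suc n)) (b n))
       = (\<lambda>n. coset (G (Suc n)) (a n + b n))"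
  unfolding gradd_def by (rule ext) (rule coset_add[OF assms])

lemma geometric_sum_times_one_minus: "(\<Sum>k<n. w ^ k) * (1 - w) = 1 - (w::'a::ring_1) ^ n"
proof (induction n)
  case 0 then show ?case by simp
next
  case (Suc n)
  have "(\<Sum>k<Suc n. w ^ k) * (1 - w) = (\<Sum>k<n. w ^ k) * (1 - w) + w ^ n * (1 - w)"
    by (simp add: distrib_right)
  also have "\<dots> = 1 - w ^ n + (w ^ n - w ^ n * w)" using Suc by (simp add: right_diff_distrib)
  also have "\<dots> = 1 - w ^ Suc n" by (simp add: power_commutes)
  finally show ?case .
qed

lemma sum_mult_sum_lessThan_triangle:
  fixes f g :: "nat \<Rightarrow> 'a::semiring_0"
  assumes "\<And>i. i \<ge> N \<Longrightarrow> f i = 0" and "\<And>j. j \<ge> N \<Longrightarrow> g j = 0"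
  shows "(\<Sum>i<N. f i) * (\<Sum>j<N. g j) = (\<Sum>k<2 * N. \<Sum>i\<le>k. f i * g (k - i))"
proof -
  have "(\<Sum>i<N. f i) * (\<Sum>j<N. g j) = (\<Sum>(i, j)\<in>{..<N} \<times> {..<N}. f i * g j)"
    by (simp add: sum_product sum.cartesian_product)
  also have "\<dots> = (\<Sum>(i, j)\<in>{(i, j). i + j < 2 * N}. f i * g j)"
  proof (rule sum.mono_neutral_left)
    show "finite {(i, j). i + j < 2 * N}"
      by (rule finite_subset[of _ "{..<2 * N} \<times> {..<2 * N}"]) auto
    show "\<forall>p\<in>{(i, j). i + j < 2 * N} - {..<N} \<times> {..<N}. (case p of (i, j) \<Rightarrow> f i * g j) = 0"
      using assms by auto (metis mult_zero_left mult_zero_right not_less)+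
  qed auto
  also have "\<dots> = (\<Sum>k<2 * N. \<Sum>i\<le>k. f i * g (k - i))" by (rule sum.triangle_reindex)
  finally show ?thesis .
qed

lemma sum_single_term:
  fixes g :: "nat \<Rightarrow> 'v::comm_monoid_add"
  assumes "\<And>i. i \<le> n \<Longrightarrow> g i = (if i = k \<and> n = k' then v else 0)" "k \<le> k'"
  shows "(\<Sum>i\<le>n. g i) = (if n = k' then v else 0)"
proof (cases "n = k'")
  case True
  then have "(\<Sum>i\<le>n. g i) = (\<Sum>i\<le>n. if i = k then v else 0)" using assms(1) by (intro sum.cong) auto
  also have "\<dots> = v" using True assms(2) by (simp add: sum.delta)
  finally show ?thesis using True by simp
next
  case False
  then show ?thesis using assms(1) by simp
qed

lemma vs_simps:
  assumes "vs_axioms sc"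
  shows "sc 1 x = x" "sc (a * b) x = sc a (sc b x)" "sc (a + b) x = sc a x + sc b x"
    "sc a (x + y) = sc a x + sc a y"
  using assms unfolding vs_axioms_def by auto

lemma vs_zero_right: "vs_axioms sc \<Longrightarrow> sc a 0 = 0"
  using vs_simps(4)[of sc a 0 0] by simp

lemma vs_zero_left: "vs_axioms sc \<Longrightarrow> sc 0 x = 0"
  using vs_simps(3)[of sc 0 0 x] by simp

lemma vs_neg_one: "vs_axioms sc \<Longrightarrow> sc (-1) x = - x"
proof -
  assume v: "vs_axioms sc"
  have "sc (-1) x + x = 0" using vs_simps(3)[OF v, of "-1" 1 x] vs_zero_left[OF v] vs_simps(1)[OF v] by simp
  then show ?thesis by (simp add: eq_neg_iff_add_eq_0)
qed

lemma vs_sum: "vs_axioms sc \<Longrightarrow> sc a (sum f I) = (\<Sum>i\<in>I. sc a (f i))"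
  by (induction I rule: infinite_finite_induct) (auto simp: vs_zero_right vs_simps(4))

lemma submod_add_subgroup:
  assumes "vs_axioms sc" "submod sc S X" "-1 \<in> S"
  shows "add_subgroup X"
proof -
  have h: "0 \<in> X" "\<forall>x\<in>X. \<forall>y\<in>X. x + y \<in> X" "\<forall>c\<in>S. \<forall>x\<in>X. sc c x \<in> X"
    using assms(2) unfolding submod_def by auto
  have "\<forall>x\<in>X. - x \<in> X"
  proof
    fix x assume "x \<in> X"
    then have "sc (-1) x \<in> X" using h(3) assms(3) by blast
    then show "- x \<in> X" by (simp add: vs_neg_one[OF assms(1)])
  qed
  then show ?thesis unfolding add_subgroup_def using h(1,2) by blast
qed

lemma lspan_memI:
  "finite F \<Longrightarrow> F \<subseteq> X \<Longrightarrow> \<forall>x\<in>F. c x \<in> S \<Longrightarrow> y = (\<Sum>x\<in>F. sc (c x) x) \<Longrightarrow> y \<in> lspan sc S X"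
  unfolding lspan_def by blast

lemma lspan_add:
  assumes v: "vs_axioms sc" and S: "0 \<in> S" "\<forall>a\<in>S. \<forall>b\<in>S. a + b \<in> S"
    and x: "x \<in> lspan sc S X" and y: "y \<in> lspan sc S X"
  shows "x + y \<in> lspan sc S X"
proof -
  obtain F c where F: "finite F" "F \<subseteq> X" "\<forall>z\<in>F. c z \<in> S" "x = (\<Sum>z\<in>F. sc (c z) z)"
    using x unfolding lspan_def by blast
  obtain G d where G: "finite G" "G \<subseteq> X" "\<forall>z\<in>G. d z \<in> S" "y = (\<Sum>z\<in>G. sc (d z) z)"
    using y unfolding lspan_def by blast
  define c' where "c' z = (if z \<in> F then c z else 0)" for z
  define d' where "d' z = (if z \<in> G then d z else 0)" for z
  have fin: "finite (F \<union> G)" using F(1) G(1) by simp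
  have "x = (\<Sum>z\<in>F \<union> G. sc (c' z) z)"
    unfolding F(4)
  proof (rule sum.mono_neutral_cong_left[OF fin])
    show "\<forall>i\<in>F \<union> G - F. sc (c' i) i = 0" by (simp add: c'_def vs_zero_left[OF v])
    show "\<And>z. z \<in> F \<Longrightarrow> sc (c z) z = sc (c' z) z" by (simp add: c'_def)
  qed simp
  moreover have "y = (\<Sum>z\<in>F \<union> G. sc (d' z) z)"
    unfolding G(4)
  proof (rule sum.mono_neutral_cong_left[OF fin])
    show "\<forall>i\<in>F \<union> G - G. sc (d' i) i = 0" by (simp add: d'_def vs_zero_left[OF v])
    show "\<And>z. z \<in> G \<Longrightarrow> sc (d z) z = sc (d' z) z" by (simp add: d'_def)
  qed simp
  ultimately have "x + y = (\<Sum>z\<in>F \<union> G. sc (c' z + d' z) z)"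
    by (simp add: vs_simps(3)[OF v] sum.distrib)
  moreover have "\<forall>z\<in>F \<union> G. c' z + d' z \<in> S"
    using F(3) G(3) S by (auto simp: c'_def d'_def)
  ultimately show ?thesis using F G by (intro lspan_memI[of "F \<union> G" _ "\<lambda>z. c' z + d' z"]) auto
qed

lemma lspan_sc:
  assumes v: "vs_axioms sc" and S: "\<forall>a\<in>S. \<forall>b\<in>S. a * b \<in> S" and a: "a \<in> S"
    and x: "x \<in> lspan sc S X"
  shows "sc a x \<in> lspan sc S X"
proof -
  obtain F c where F: "finite F" "F \<subseteq> X" "\<forall>z\<in>F. c z \<in> S" "x = (\<Sum>z\<in>F. sc (c z) z)"
    using x unfolding lspan_def by blast
  have "sc a x = (\<Sum>z\<in>F. sc (a * c z) z)"
    by (simp add: F(4) vs_sum[OF v] vs_simps(2)[OF v])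
  moreover have "\<forall>z\<in>F. a * c z \<in> S" using F(3) S a by auto
  ultimately show ?thesis using F by (intro lspan_memI[of F _ "\<lambda>z. a * c z"]) auto
qed

lemma lspan_base:
  assumes v: "vs_axioms sc" and "1 \<in> S" "x \<in> X"
  shows "x \<in> lspan sc S X"
proof (rule lspan_memI[of "{x}" _ "\<lambda>_. 1"])
  show "x = (\<Sum>z\<in>{x}. sc 1 z)" by (simp add: vs_simps(1)[OF v])
qed (use assms in auto)

section \<open>Homogeneous components of a tightly graded algebra\<close>

locale tight_graded_alg =
  fixes sc :: "'k::field \<Rightarrow> 'a::ring_1 \<Rightarrow> 'a" and gK :: "nat \<Rightarrow> 'a set"
  assumes kalg_sc: "kalg sc" and tgrading: "tight_grading sc gK"
begin

lemma sc_vs_axioms: "vs_axioms sc" using kalg_sc unfolding kalg_def by auto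

lemma sc_mult_left: "sc a (x * y) = sc a x * y"
  using kalg_sc unfolding kalg_def by blast

lemma gK_add_subgroup: "add_subgroup (gK n)"
  using tgrading submod_add_subgroup[OF sc_vs_axioms] unfolding tight_grading_def by blast

lemma gK_sc: "x \<in> gK n \<Longrightarrow> sc c x \<in> gK n"
  using tgrading unfolding tight_grading_def submod_def by blast

lemma gK_mul: "x \<in> gK i \<Longrightarrow> y \<in> gK j \<Longrightarrow> x * y \<in> gK (i + j)"
  using tgrading unfolding tight_grading_def by blast

lemma one_gK: "1 \<in> gK 0"
  using tgrading unfolding tight_grading_def by blast

lemma gK_direct_sum: "graded_ds gK UNIV"
  using tgrading unfolding tight_grading_def by blast

definition hcomp :: "nat \<Rightarrow> 'a \<Rightarrow> 'a" where
  "hcomp n x = (THE f. (\<forall>n. f n \<in> gK n) \<and> finite {n. f n \<noteq> 0} \<and> x = sum f {n. f n \<noteq> 0}) n"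

lemma hcomp_ex1: "\<exists>!f. (\<forall>n. f n \<in> gK n) \<and> finite {n. f n \<noteq> 0} \<and> x = sum f {n. f n \<noteq> 0}"
  using gK_direct_sum unfolding graded_ds_def by blast

lemma hcomp_unique:
  assumes "\<forall>n. f n \<in> gK n" "finite {n. f n \<noteq> 0}" "x = sum f {n. f n \<noteq> 0}"
  shows "hcomp n x = f n"
proof -
  have "(THE f. (\<forall>n. f n \<in> gK n) \<and> finite {n. f n \<noteq> 0} \<and> x = sum f {n. f n \<noteq> 0}) = f"
    by (rule the1_equality[OF hcomp_ex1]) (use assms in blast)
  then show ?thesis unfolding hcomp_def by simp
qed

lemma hcomp_spec: "\<forall>n. hcomp n x \<in> gK n" "finite {n. hcomp n x \<noteq> 0}" "x = (\<Sum>n\<in>{n. hcomp n x \<noteq> 0}. hcomp n x)"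
proof -
  define f where "f = (THE f. (\<forall>n. f n \<in> gK n) \<and> finite {n. f n \<noteq> 0} \<and> x = sum f {n. f n \<noteq> 0})"
  have hf: "(\<lambda>n. hcomp n x) = f" unfolding f_def hcomp_def by simp
  have "(\<forall>n. f n \<in> gK n) \<and> finite {n. f n \<noteq> 0} \<and> x = sum f {n. f n \<noteq> 0}"
    unfolding f_def by (rule theI'[OF hcomp_ex1])
  then show "\<forall>n. hcomp n x \<in> gK n" "finite {n. hcomp n x \<noteq> 0}" "x = (\<Sum>n\<in>{n. hcomp n x \<noteq> 0}. hcomp n x)"
    unfolding hf[symmetric] by auto
qed

lemma hcomp_in: "hcomp n x \<in> gK n" using hcomp_spec(1) by blast

lemma hcomp_eq_if_sum_lessThan:
  assumes "\<forall>n. f n \<in> gK n" "\<forall>n\<ge>N. f n = 0" "x = (\<Sum>n<N. f n)"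
  shows "hcomp n x = f n"
proof (rule hcomp_unique)
  have sub: "{n. f n \<noteq> 0} \<subseteq> {..<N}" using assms(2) by (auto simp: not_less[symmetric])
  then show "finite {n. f n \<noteq> 0}" by (rule finite_subset) simp
  show "x = sum f {n. f n \<noteq> 0}" unfolding assms(3)
    by (rule sum.mono_neutral_right) (use sub in auto)
qed (use assms in auto)

lemma hcomp_eventually_zero: "\<exists>N. \<forall>n\<ge>N. hcomp n x = 0"
proof -
  obtain N where "\<forall>n\<in>{n. hcomp n x \<noteq> 0}. n < N"
    using hcomp_spec(2) finite_nat_set_iff_bounded by blast
  then have "\<forall>n\<ge>N. hcomp n x = 0" by (auto simp: not_le[symmetric])
  then show ?thesis by blast
qed

lemma sum_hcomp_lessThan:
  assumes "\<forall>n\<ge>N. hcomp n x = 0"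
  shows "x = (\<Sum>n<N. hcomp n x)"
proof -
  have sub: "{n. hcomp n x \<noteq> 0} \<subseteq> {..<N}" using assms by (auto simp: not_less[symmetric])
  have "x = (\<Sum>n\<in>{n. hcomp n x \<noteq> 0}. hcomp n x)" by (rule hcomp_spec(3))
  also have "\<dots> = (\<Sum>n<N. hcomp n x)"
    by (rule sum.mono_neutral_left) (use sub in auto)
  finally show ?thesis .
qed

lemma hcomp_add: "hcomp n (x + y) = hcomp n x + hcomp n y"
proof -
  obtain N1 where N1: "\<forall>n\<ge>N1. hcomp n x = 0" using hcomp_eventually_zero by blast
  obtain N2 where N2: "\<forall>n\<ge>N2. hcomp n y = 0" using hcomp_eventually_zero by blast
  let ?N = "max N1 N2"
  have "x = (\<Sum>n<?N. hcomp n x)" "y = (\<Sum>n<?N. hcomp n y)"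
    using N1 N2 by (auto intro!: sum_hcomp_lessThan)
  then have "x + y = (\<Sum>n<?N. hcomp n x + hcomp n y)" by (simp add: sum.distrib)
  then show ?thesis
    by (rule hcomp_eq_if_sum_lessThan[rotated 2]) (use N1 N2 hcomp_in add_subgroupD(2)[OF gK_add_subgroup] in auto)
qed

lemma hcomp_zero: "hcomp n 0 = 0"
  using hcomp_add[of n 0 0] by simp

lemma hcomp_neg: "hcomp n (- x) = - hcomp n x"
  using hcomp_add[of n x "-x"] hcomp_zero by (simp add: eq_neg_iff_add_eq_0 add.commute)

lemma hcomp_diff: "hcomp n (x - y) = hcomp n x - hcomp n y"
  using hcomp_add[of n x "-y"] hcomp_neg by simp

lemma hcomp_sum: "hcomp n (sum f I) = (\<Sum>i\<in>I. hcomp n (f i))"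
  by (induction I rule: infinite_finite_induct) (auto simp: hcomp_zero hcomp_add)

lemma hcomp_sc: "hcomp n (sc c x) = sc c (hcomp n x)"
proof -
  obtain N where N: "\<forall>n\<ge>N. hcomp n x = 0" using hcomp_eventually_zero by blast
  have "x = (\<Sum>n<N. hcomp n x)" using N by (rule sum_hcomp_lessThan)
  then have "sc c x = (\<Sum>n<N. sc c (hcomp n x))" by (metis vs_sum[OF sc_vs_axioms])
  then show ?thesis
    by (rule hcomp_eq_if_sum_lessThan[rotated 2]) (use N hcomp_in gK_sc vs_zero_right[OF sc_vs_axioms] in auto)
qed

lemma hcomp_homog: "x \<in> gK m \<Longrightarrow> hcomp n x = (if n = m then x else 0)"
  by (rule hcomp_eq_if_sum_lessThan[where N="Suc m"])
     (auto simp: add_subgroupD(1)[OF gK_add_subgroup] lessThan_Suc)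

definition deg_bound :: nat where
  "deg_bound = (SOME N. \<forall>x. \<forall>n\<ge>N. hcomp n x = 0)"

lemma deg_bound_ex: "\<exists>N. \<forall>x. \<forall>n\<ge>N. hcomp n x = 0"
proof -
  obtain B where B: "finite B" "lspan sc UNIV B = UNIV" using kalg_sc unfolding kalg_def by blast
  have "\<forall>b. \<exists>N. \<forall>n\<ge>N. hcomp n b = 0" using hcomp_eventually_zero by blast
  from choice[OF this] obtain Nb where Nb: "\<forall>b. \<forall>n\<ge>Nb b. hcomp n b = 0" by blast
  let ?N = "\<Sum>b\<in>B. Nb b"
  have "\<forall>n\<ge>?N. hcomp n x = 0" for x
  proof (intro allI impI)
    fix n assume n: "n \<ge> ?N"
    have "x \<in> lspan sc UNIV B" using B by simp
    then obtain F c where F: "finite F" "F \<subseteq> B" "x = (\<Sum>z\<in>F. sc (c z) z)"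
      unfolding lspan_def by blast
    have "hcomp n x = (\<Sum>z\<in>F. sc (c z) (hcomp n z))" by (simp add: F(3) hcomp_sum hcomp_sc)
    also have "\<dots> = 0"
    proof (rule sum.neutral, rule ballI)
      fix z assume "z \<in> F"
      then have "Nb z \<le> ?N" using F(2) B(1) by (intro member_le_sum) auto
      then show "sc (c z) (hcomp n z) = 0" using Nb n vs_zero_right[OF sc_vs_axioms] by simp
    qed
    finally show "hcomp n x = 0" .
  qed
  then show ?thesis by blast
qed

lemma hcomp_beyond_deg_bound: "n \<ge> deg_bound \<Longrightarrow> hcomp n x = 0"
  using someI_ex[OF deg_bound_ex] unfolding deg_bound_def by blast

lemma sum_hcomp: "x = (\<Sum>n<deg_bound. hcomp n x)"
  using hcomp_beyond_deg_bound by (intro sum_hcomp_lessThan) auto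

lemma hcomp_one: "hcomp n 1 = (if n = 0 then 1 else 0)"
  using hcomp_homog[OF one_gK] by simp

lemma hcomp_mul: "hcomp n (x * y) = (\<Sum>i\<le>n. hcomp i x * hcomp (n - i) y)"
proof (rule hcomp_eq_if_sum_lessThan[where N = "2 * deg_bound"])
  show "\<forall>k. (\<Sum>i\<le>k. hcomp i x * hcomp (k - i) y) \<in> gK k"
  proof (intro allI add_subgroup_sum[OF gK_add_subgroup] ballI)
    fix k i :: nat assume "i \<in> {..k}"
    then show "hcomp i x * hcomp (k - i) y \<in> gK k"
      using gK_mul[OF hcomp_in hcomp_in, of i x "k - i" y] by simp
  qed
  show "\<forall>k\<ge>2 * deg_bound. (\<Sum>i\<le>k. hcomp i x * hcomp (k - i) y) = 0"
  proof (intro allI impI sum.neutral ballI)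
    fix k i :: nat assume "2 * deg_bound \<le> k" "i \<in> {..k}"
    then have "deg_bound \<le> i \<or> deg_bound \<le> k - i" by auto
    then show "hcomp i x * hcomp (k - i) y = 0" by (auto simp: hcomp_beyond_deg_bound)
  qed
  show "x * y = (\<Sum>k<2 * deg_bound. \<Sum>i\<le>k. hcomp i x * hcomp (k - i) y)"
  proof -
    have "x * y = (\<Sum>i<deg_bound. hcomp i x) * (\<Sum>j<deg_bound. hcomp j y)"
      using sum_hcomp[of x] sum_hcomp[of y] by simp
    also have "\<dots> = (\<Sum>k<2 * deg_bound. \<Sum>i\<le>k. hcomp i x * hcomp (k - i) y)"
      by (rule sum_mult_sum_lessThan_triangle) (simp_all add: hcomp_beyond_deg_bound)
    finally show ?thesis .
  qed
qed

definition deg_ge :: "nat \<Rightarrow> 'a set" where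
  "deg_ge r = {x. \<forall>i<r. hcomp i x = 0}"

lemma deg_ge_add_subgroup: "add_subgroup (deg_ge r)"
  unfolding add_subgroup_def deg_ge_def by (simp add: hcomp_zero hcomp_add hcomp_neg)

lemma deg_ge_0: "deg_ge 0 = UNIV"
  unfolding deg_ge_def by simp

lemma deg_ge_anti: "r \<le> s \<Longrightarrow> deg_ge s \<subseteq> deg_ge r"
  unfolding deg_ge_def by auto

lemma deg_ge_deg_bound: "deg_ge deg_bound = {0}"
proof
  show "deg_ge deg_bound \<subseteq> {0}"
  proof
    fix x assume "x \<in> deg_ge deg_bound"
    then have "\<forall>i<deg_bound. hcomp i x = 0" unfolding deg_ge_def by simp
    then have "x = (\<Sum>n<deg_bound. 0)" using sum_hcomp[of x] by simp
    then show "x \<in> {0}" by simp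
  qed
  show "{0} \<subseteq> deg_ge deg_bound" using add_subgroupD(1)[OF deg_ge_add_subgroup] by simp
qed

lemma deg_ge_beyond_deg_bound: "n \<ge> deg_bound \<Longrightarrow> x \<in> deg_ge n \<Longrightarrow> x = 0"
  using deg_ge_anti[of deg_bound n] deg_ge_deg_bound by auto

lemma deg_ge_mul: "x \<in> deg_ge p \<Longrightarrow> y \<in> deg_ge q \<Longrightarrow> x * y \<in> deg_ge (p + q)"
proof -
  assume x: "x \<in> deg_ge p" and y: "y \<in> deg_ge q"
  have "hcomp n (x * y) = 0" if n: "n < p + q" for n
  proof -
    have "hcomp i x * hcomp (n - i) y = 0" if i: "i \<le> n" for i
    proof (cases "i < p")
      case True then show ?thesis using x unfolding deg_ge_def by simp
    next
      case False then have "n - i < q" using n i by arith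
      then show ?thesis using y unfolding deg_ge_def by simp
    qed
    then show ?thesis by (simp add: hcomp_mul)
  qed
  then show ?thesis unfolding deg_ge_def by simp
qed

lemma deg_ge_sc: "x \<in> deg_ge r \<Longrightarrow> sc c x \<in> deg_ge r"
  unfolding deg_ge_def by (simp add: hcomp_sc vs_zero_right[OF sc_vs_axioms])

lemma gK_deg_ge: "x \<in> gK n \<Longrightarrow> r \<le> n \<Longrightarrow> x \<in> deg_ge r"
  unfolding deg_ge_def by (simp add: hcomp_homog)

lemma deg_ge_expand: "x \<in> deg_ge r \<Longrightarrow> x = (\<Sum>n\<in>{r..<deg_bound}. hcomp n x)"
proof -
  assume x: "x \<in> deg_ge r"
  have "x = (\<Sum>n<deg_bound. hcomp n x)" by (rule sum_hcomp)
  also have "\<dots> = (\<Sum>n\<in>{r..<deg_bound}. hcomp n x)"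
    by (rule sum.mono_neutral_right) (use x in \<open>auto simp: deg_ge_def\<close>)
  finally show ?thesis .
qed

lemma power_in_deg_ge: "w \<in> deg_ge 1 \<Longrightarrow> w ^ k \<in> deg_ge k"
proof (induction k)
  case 0 then show ?case by (simp add: deg_ge_0)
next
  case (Suc k)
  then have "w * w ^ k \<in> deg_ge (1 + k)" by (intro deg_ge_mul) auto
  then show ?case by simp
qed

text \<open>Taking degree-0 components is a ring homomorphism onto the semisimple ring \<open>gK 0\<close>.\<close>

lemma jrad_subset_deg_ge_1: "jrad \<subseteq> deg_ge 1"
proof
  fix x :: 'a assume x: "x \<in> jrad"
  have "\<exists>z\<in>gK 0. z * (1 - y * hcomp 0 x) = 1" if y: "y \<in> gK 0" for y
  proof -
    obtain z where "z * (1 - y * x) = 1" using x unfolding jrad_def by blast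
    then have "hcomp 0 (z * (1 - y * x)) = 1" by (simp add: hcomp_one)
    moreover have "hcomp 0 (z * (1 - y * x)) = hcomp 0 z * (1 - y * hcomp 0 x)"
      using hcomp_homog[OF y, of 0] by (simp add: hcomp_mul hcomp_diff hcomp_one)
    ultimately show ?thesis using hcomp_in by metis
  qed
  then have "hcomp 0 x = 0"
    using tgrading hcomp_in unfolding tight_grading_def semisimple_sub_def by blast
  then show "x \<in> deg_ge 1" unfolding deg_ge_def by simp
qed

lemma deg_ge_1_subset_jrad: "deg_ge 1 \<subseteq> jrad"
proof
  fix x assume x: "x \<in> deg_ge 1"
  have "\<exists>z. z * (1 - y * x) = 1" for y
  proof -
    have "y * x \<in> deg_ge (0 + 1)" using x by (intro deg_ge_mul) (auto simp: deg_ge_0)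
    then have "(y * x) ^ deg_bound \<in> deg_ge deg_bound" using power_in_deg_ge by simp
    then have "(y * x) ^ deg_bound = 0" using deg_ge_deg_bound by simp
    then have "(\<Sum>k<deg_bound. (y * x) ^ k) * (1 - y * x) = 1"
      using geometric_sum_times_one_minus[of "y * x" deg_bound] by simp
    then show ?thesis by blast
  qed
  then show "x \<in> jrad" unfolding jrad_def by blast
qed

lemma jrad_eq_deg_ge_1: "jrad = deg_ge 1"
  using jrad_subset_deg_ge_1 deg_ge_1_subset_jrad by blast

definition gK1_mult :: "nat \<Rightarrow> 'a set" where
  "gK1_mult n = addspan {a * b | a b. a \<in> gK 1 \<and> b \<in> gK (n - 1)}"

lemma gK1_mult_sc: "y \<in> gK1_mult n \<Longrightarrow> sc c y \<in> gK1_mult n"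
  unfolding gK1_mult_def
proof (rule addspan_map[where f = "sc c"])
  show "sc c (u + v) = sc c u + sc c v" for u v by (rule vs_simps(4)[OF sc_vs_axioms])
  fix z assume "z \<in> {a * b | a b. a \<in> gK 1 \<and> b \<in> gK (n - 1)}"
  then obtain a b where z: "z = a * b" "a \<in> gK 1" "b \<in> gK (n - 1)" by blast
  then have "sc c z = sc c a * b" "sc c a \<in> gK 1" by (simp_all add: sc_mult_left gK_sc)
  then show "sc c z \<in> addspan {a * b | a b. a \<in> gK 1 \<and> b \<in> gK (n - 1)}"
    using z(3) by (intro addspan.as_base) blast
qed

lemma gK0_mult_gK1_mult: "a \<in> gK 0 \<Longrightarrow> y \<in> gK1_mult n \<Longrightarrow> a * y \<in> gK1_mult n"
  unfolding gK1_mult_def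
proof (rule addspan_map[where f = "\<lambda>z. a * z"])
  show "a * (u + v) = a * u + a * v" for u v by (simp add: distrib_left)
  fix z assume a: "a \<in> gK 0" and "z \<in> {a * b | a b. a \<in> gK 1 \<and> b \<in> gK (n - 1)}"
  then obtain a' b where z: "z = a' * b" "a' \<in> gK 1" "b \<in> gK (n - 1)" by blast
  have "a * a' \<in> gK (0 + 1)" by (rule gK_mul[OF a z(2)])
  moreover have "a * z = (a * a') * b" using z(1) by (simp add: mult.assoc)
  ultimately show "a * z \<in> addspan {a * b | a b. a \<in> gK 1 \<and> b \<in> gK (n - 1)}"
    using z(3) by (intro addspan.as_base) auto
qed

lemma gK1_mult_mult_gK:
  assumes i: "i \<ge> 1" and y: "y \<in> gK1_mult i" and b: "b \<in> gK j"
  shows "y * b \<in> gK1_mult (i + j)"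
  unfolding gK1_mult_def
proof (rule addspan_map[where f = "\<lambda>z. z * b"])
  show "(u + v) * b = u * b + v * b" for u v by (simp add: distrib_right)
  show "y \<in> addspan {a * b | a b. a \<in> gK 1 \<and> b \<in> gK (i - 1)}"
    using y unfolding gK1_mult_def .
  fix z assume "z \<in> {a * b | a b. a \<in> gK 1 \<and> b \<in> gK (i - 1)}"
  then obtain a c where z: "z = a * c" "a \<in> gK 1" "c \<in> gK (i - 1)" by blast
  have "c * b \<in> gK (i - 1 + j)" by (rule gK_mul[OF z(3) b])
  moreover have "i - 1 + j = i + j - 1" using i by simp
  moreover have "z * b = a * (c * b)" using z(1) by (simp add: mult.assoc)
  ultimately show "z * b \<in> addspan {a * b | a b. a \<in> gK 1 \<and> b \<in> gK (i + j - 1)}"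
    using z(2) by (intro addspan.as_base) auto
qed

lemma hcomp_in_gK1_mult_if_alg_gen:
  assumes "x \<in> alg_gen sc (gK 0 \<union> gK 1)" and "n \<ge> 1"
  shows "hcomp n x \<in> gK1_mult n"
  using assms
proof (induction arbitrary: n rule: alg_gen.induct)
  case (ag_base x)
  have "1 \<in> gK (1 - 1)" using one_gK by simp
  then have "x \<in> gK 1 \<Longrightarrow> x * 1 \<in> gK1_mult 1"
    unfolding gK1_mult_def by (blast intro: addspan.as_base)
  then show ?case
    using ag_base \<open>n \<ge> 1\<close> by (auto simp: hcomp_homog gK1_mult_def intro: addspan.as_zero)
next
  case ag_one
  then show ?case unfolding gK1_mult_def by (simp add: hcomp_one addspan.as_zero)
next
  case (ag_sc x c)
  then show ?case by (simp add: hcomp_sc gK1_mult_sc)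
next
  case (ag_add x y)
  then show ?case unfolding gK1_mult_def by (simp add: hcomp_add addspan.as_add)
next
  case (ag_mul x y)
  have "hcomp i x * hcomp (n - i) y \<in> gK1_mult n" if "i \<le> n" for i
  proof (cases "i = 0")
    case True
    then show ?thesis using ag_mul by (simp add: gK0_mult_gK1_mult hcomp_in)
  next
    case False
    then have "hcomp i x * hcomp (n - i) y \<in> gK1_mult (i + (n - i))"
      using ag_mul.IH(1) by (intro gK1_mult_mult_gK hcomp_in) auto
    then show ?thesis using that by simp
  qed
  then show ?case
    unfolding hcomp_mul by (auto simp: gK1_mult_def intro: addspan_sum)
qed

lemma gK_subset_gK1_mult: "g \<in> gK n \<Longrightarrow> n \<ge> 1 \<Longrightarrow> g \<in> gK1_mult n"
proof -
  assume g: "g \<in> gK n" and n: "n \<ge> 1"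
  have "g \<in> alg_gen sc (gK 0 \<union> gK 1)" using tgrading unfolding tight_grading_def by blast
  then have "hcomp n g \<in> gK1_mult n" using hcomp_in_gK1_mult_if_alg_gen n by blast
  then show ?thesis using g by (simp add: hcomp_homog)
qed

lemma gK1_mult_subset_addspan_deg_ge:
  assumes "r < n"
  shows "gK1_mult n \<subseteq> addspan {x * y | x y. x \<in> deg_ge 1 \<and> y \<in> deg_ge r}"
  unfolding gK1_mult_def
proof (rule addspan_mono, rule subsetI)
  fix z assume "z \<in> {a * b | a b. a \<in> gK 1 \<and> b \<in> gK (n - 1)}"
  then obtain a b where ab: "z = a * b" "a \<in> gK 1" "b \<in> gK (n - 1)" by blast
  have "a \<in> deg_ge 1" "b \<in> deg_ge r" using gK_deg_ge[OF ab(2)] gK_deg_ge[OF ab(3)] assms by auto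
  then show "z \<in> {x * y | x y. x \<in> deg_ge 1 \<and> y \<in> deg_ge r}" using ab(1) by blast
qed

lemma deg_ge_Suc_eq_addspan: "deg_ge (Suc r) = addspan {x * y | x y. x \<in> deg_ge 1 \<and> y \<in> deg_ge r}"
proof
  show "addspan {x * y | x y. x \<in> deg_ge 1 \<and> y \<in> deg_ge r} \<subseteq> deg_ge (Suc r)"
  proof (rule addspan_sub[OF deg_ge_add_subgroup], rule subsetI)
    fix z assume "z \<in> {x * y | x y. x \<in> deg_ge 1 \<and> y \<in> deg_ge r}"
    then obtain a b where "z = a * b" "a \<in> deg_ge 1" "b \<in> deg_ge r" by blast
    then show "z \<in> deg_ge (Suc r)" using deg_ge_mul[of a 1 b r] by simp
  qed
  show "deg_ge (Suc r) \<subseteq> addspan {x * y | x y. x \<in> deg_ge 1 \<and> y \<in> deg_ge r}"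
  proof
    fix x assume x: "x \<in> deg_ge (Suc r)"
    have "hcomp n x \<in> addspan {x * y | x y. x \<in> deg_ge 1 \<and> y \<in> deg_ge r}"
      if n: "n \<in> {Suc r..<deg_bound}" for n
    proof -
      have "hcomp n x \<in> gK1_mult n" using gK_subset_gK1_mult[OF hcomp_in] n by simp
      then show ?thesis using gK1_mult_subset_addspan_deg_ge[of r n] n by auto
    qed
    then have "(\<Sum>n\<in>{Suc r..<deg_bound}. hcomp n x)
        \<in> addspan {x * y | x y. x \<in> deg_ge 1 \<and> y \<in> deg_ge r}"
      by (intro addspan_sum) auto
    then show "x \<in> addspan {x * y | x y. x \<in> deg_ge 1 \<and> y \<in> deg_ge r}"
      using deg_ge_expand[OF x] by simp
  qed
qed

lemma idpow_jrad_eq_deg_ge: "idpow jrad r = deg_ge r"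
proof (induction r)
  case (Suc r)
  then show ?case by (simp only: idpow.simps jrad_eq_deg_ge_1 deg_ge_Suc_eq_addspan[of r])
qed (simp add: deg_ge_0)

end

section \<open>The graded order and its associated graded algebra\<close>

locale graded_order = tight_graded_alg sc gK for sc :: "'k::field \<Rightarrow> 'a::ring_1 \<Rightarrow> 'a" and gK +
  fixes Ov :: "'k set" and A :: "'a set" and aa :: "nat \<Rightarrow> 'a set"
  assumes dvr: "dvr Ov" and one_in_A: "1 \<in> A" and A_mult_closed: "\<forall>x\<in>A. \<forall>y\<in>A. x * y \<in> A"
    and A_lspan: "\<exists>B. A = lspan sc Ov B"
    and aa_direct_sum: "graded_ds aa A"
    and aa_span_gK: "\<forall>r. lspan sc UNIV (aa r) = gK r"
begin

lemma Ov_closed: "1 \<in> Ov" "x \<in> Ov \<Longrightarrow> y \<in> Ov \<Longrightarrow> x + y \<in> Ov" "x \<in> Ov \<Longrightarrow> y \<in> Ov \<Longrightarrow> x * y \<in> Ov"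
  "x \<in> Ov \<Longrightarrow> - x \<in> Ov"
  using dvr unfolding dvr_def by blast+

lemma minus_one_in_Ov: "-1 \<in> Ov" using Ov_closed(1,4) by blast

lemma zero_in_Ov: "0 \<in> Ov" using Ov_closed(2)[OF Ov_closed(1) minus_one_in_Ov] by simp

lemma A_add: "x \<in> A \<Longrightarrow> y \<in> A \<Longrightarrow> x + y \<in> A"
  using A_lspan lspan_add[OF sc_vs_axioms zero_in_Ov] Ov_closed(2) by blast

lemma A_sc: "c \<in> Ov \<Longrightarrow> x \<in> A \<Longrightarrow> sc c x \<in> A"
  using A_lspan lspan_sc[OF sc_vs_axioms] Ov_closed(3) by blast

lemma A_add_subgroup: "add_subgroup A"
proof -
  have "0 \<in> A" using A_sc[OF zero_in_Ov one_in_A] vs_zero_left[OF sc_vs_axioms] by simp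
  moreover have "\<forall>x\<in>A. - x \<in> A" using A_sc[OF minus_one_in_Ov] vs_neg_one[OF sc_vs_axioms] by metis
  ultimately show ?thesis unfolding add_subgroup_def using A_add by blast
qed

lemma A_mul: "x \<in> A \<Longrightarrow> y \<in> A \<Longrightarrow> x * y \<in> A" using A_mult_closed by blast

lemma aa_A: "aa r \<subseteq> A" using aa_direct_sum unfolding graded_ds_def by blast

lemma aa_gK: "aa r \<subseteq> gK r"
  using lspan_base[OF sc_vs_axioms, of UNIV _ "aa r"] aa_span_gK by blast

text \<open>Since \<open>aa r \<subseteq> gK r\<close>, the decomposition of \<open>x \<in> A\<close> along \<open>aa\<close> is its decomposition along \<open>gK\<close>.\<close>

lemma hcomp_in_aa: "x \<in> A \<Longrightarrow> hcomp n x \<in> aa n"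
proof -
  assume x: "x \<in> A"
  then obtain f where f: "\<forall>n. f n \<in> aa n" "finite {n. f n \<noteq> 0}" "x = sum f {n. f n \<noteq> 0}"
    using aa_direct_sum unfolding graded_ds_def by blast
  have "hcomp n x = f n" by (rule hcomp_unique) (use f aa_gK in auto)
  then show ?thesis using f(1) by simp
qed

lemma hcomp_in_A: "x \<in> A \<Longrightarrow> hcomp n x \<in> A" using hcomp_in_aa aa_A by blast

lemma aa_eq_A_Int_gK: "aa r = A \<inter> gK r"
proof
  show "aa r \<subseteq> A \<inter> gK r" using aa_A aa_gK by blast
  show "A \<inter> gK r \<subseteq> aa r"
  proof
    fix x assume "x \<in> A \<inter> gK r"
    then have "hcomp r x \<in> aa r" "hcomp r x = x" using hcomp_in_aa hcomp_homog by auto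
    then show "x \<in> aa r" by simp
  qed
qed

lemma ratil_eq_A_Int_deg_ge: "ratil A r = A \<inter> deg_ge r"
  unfolding ratil_def by (simp add: idpow_jrad_eq_deg_ge)

lemma sumge_aa_eq: "sumge aa r = A \<inter> deg_ge r"
proof
  show "sumge aa r \<subseteq> A \<inter> deg_ge r"
  proof
    fix x assume "x \<in> sumge aa r"
    then obtain F f where x: "x = sum f F" "\<forall>i\<in>F. r \<le> i \<and> f i \<in> aa i"
      unfolding sumge_def by blast
    show "x \<in> A \<inter> deg_ge r" unfolding x(1)
      by (rule add_subgroup_sum[OF add_subgroup_Int[OF A_add_subgroup deg_ge_add_subgroup]])
        (use x(2) gK_deg_ge aa_A aa_gK in blast)
  qed
  show "A \<inter> deg_ge r \<subseteq> sumge aa r"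
  proof
    fix x assume x: "x \<in> A \<inter> deg_ge r"
    then have "x = (\<Sum>n\<in>{r..<deg_bound}. hcomp n x)" using deg_ge_expand by blast
    moreover have "\<forall>i\<in>{r..<deg_bound}. r \<le> i \<and> hcomp i x \<in> aa i" using hcomp_in_aa x by auto
    ultimately show "x \<in> sumge aa r"
      unfolding sumge_def by (intro CollectI exI[of _ "{r..<deg_bound}"] exI[of _ "\<lambda>n. hcomp n x"]) simp
  qed
qed

lemma sumge_aa_eq_ratil: "sumge aa r = ratil A r"
  by (simp add: sumge_aa_eq ratil_eq_A_Int_deg_ge)

abbreviation F :: "nat \<Rightarrow> 'a set" where "F \<equiv> ratil A"

lemma F_add_subgroup: "add_subgroup (F r)"
  unfolding ratil_eq_A_Int_deg_ge by (rule add_subgroup_Int[OF A_add_subgroup deg_ge_add_subgroup])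

lemma hcomp_in_F: "x \<in> A \<Longrightarrow> hcomp r x \<in> F r"
  unfolding ratil_eq_A_Int_deg_ge using hcomp_in_A gK_deg_ge[OF hcomp_in] by blast

definition gr_map :: "'a \<Rightarrow> nat \<Rightarrow> 'a set" where
  "gr_map x = (\<lambda>r. coset (F (Suc r)) (hcomp r x))"

lemma F_grcarI: "\<forall>r. \<exists>y\<in>F r. c r = coset (F (Suc r)) y \<Longrightarrow> c \<in> grcar F"
  by (rule grcarI[where N = deg_bound]) (use deg_ge_beyond_deg_bound in \<open>auto simp: ratil_eq_A_Int_deg_ge\<close>)

lemma grsingle_F_in_grcar: "x \<in> F k \<Longrightarrow> grsingle F k x \<in> grcar F"
  unfolding grsingle_coset
  by (rule F_grcarI) (use add_subgroupD(1)[OF F_add_subgroup] in auto)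

lemma gr_map_grcar: "x \<in> A \<Longrightarrow> gr_map x \<in> grcar F"
proof -
  assume x: "x \<in> A"
  have "{r. gr_map x r \<noteq> F (Suc r)} \<subseteq> {..<deg_bound}"
  proof
    fix r assume "r \<in> {r. gr_map x r \<noteq> F (Suc r)}"
    then have "hcomp r x \<noteq> 0" unfolding gr_map_def by (auto simp: coset_zero)
    then show "r \<in> {..<deg_bound}" using hcomp_beyond_deg_bound by (auto simp: not_less[symmetric])
  qed
  then have "finite {r. gr_map x r \<noteq> F (Suc r)}" by (rule finite_subset) simp
  moreover have "\<forall>r. \<exists>y\<in>F r. gr_map x r = coset (F (Suc r)) y"
    unfolding gr_map_def using hcomp_in_F[OF x] by blast
  ultimately show ?thesis unfolding grcar_def by blast
qed

lemma gr_map_inj: "inj_on gr_map A"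
proof (rule inj_onI)
  fix x y assume x: "x \<in> A" and y: "y \<in> A" and e: "gr_map x = gr_map y"
  have "hcomp r x = hcomp r y" for r
  proof -
    have "coset (F (Suc r)) (hcomp r x) = coset (F (Suc r)) (hcomp r y)"
      using e unfolding gr_map_def by meson
    then have "hcomp r x - hcomp r y \<in> F (Suc r)" using coset_eq_iff[OF F_add_subgroup] by blast
    then have "hcomp r (hcomp r x - hcomp r y) = 0" unfolding ratil_eq_A_Int_deg_ge deg_ge_def by simp
    moreover have "hcomp r x - hcomp r y \<in> gK r" using add_subgroupD(4)[OF gK_add_subgroup hcomp_in hcomp_in] .
    ultimately show ?thesis by (simp add: hcomp_homog)
  qed
  then show "x = y" using sum_hcomp[of x] sum_hcomp[of y] by simp
qed

lemma coset_hcomp_eq: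
  assumes x: "x \<in> F r"
  shows "coset (F (Suc r)) (hcomp r x) = coset (F (Suc r)) x"
proof -
  have "x \<in> A" "x \<in> deg_ge r" using x unfolding ratil_eq_A_Int_deg_ge by auto
  have "hcomp i (hcomp r x - x) = 0" if "i < Suc r" for i
    using that \<open>x \<in> deg_ge r\<close> unfolding deg_ge_def
    by (cases "i = r") (simp_all add: hcomp_diff hcomp_homog[OF hcomp_in])
  moreover have "hcomp r x - x \<in> A"
    using add_subgroupD(4)[OF A_add_subgroup hcomp_in_A \<open>x \<in> A\<close>] \<open>x \<in> A\<close> by blast
  ultimately have "hcomp r x - x \<in> F (Suc r)" unfolding ratil_eq_A_Int_deg_ge deg_ge_def by blast
  then show ?thesis using coset_eq_iff[OF F_add_subgroup] by blast
qed

lemma gr_map_surj: "c \<in> grcar F \<Longrightarrow> \<exists>y\<in>A. gr_map y = c"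
proof -
  assume "c \<in> grcar F"
  then obtain xs where xs: "\<And>r. xs r \<in> F r" "\<And>r. c r = coset (F (Suc r)) (xs r)"
    using grcar_reps by blast
  define y where "y = (\<Sum>n<deg_bound. hcomp n (xs n))"
  have "xs n \<in> A" for n using xs(1) unfolding ratil_eq_A_Int_deg_ge by blast
  then have "y \<in> A" unfolding y_def
    by (intro add_subgroup_sum[OF A_add_subgroup] ballI hcomp_in_A)
  moreover have "hcomp r y = hcomp r (xs r)" for r
    by (rule hcomp_eq_if_sum_lessThan[where N = deg_bound])
      (use hcomp_in hcomp_beyond_deg_bound y_def in auto)
  then have "gr_map y r = c r" for r unfolding gr_map_def using coset_hcomp_eq[OF xs(1)] xs(2) by simp
  then have "gr_map y = c" by blast
  ultimately show ?thesis by blast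
qed

lemma gr_map_bij: "bij_betw gr_map A (grcar F)"
  unfolding bij_betw_def using gr_map_inj gr_map_grcar gr_map_surj by blast

lemma gr_map_add: "gr_map (x + y) = gradd F (gr_map x) (gr_map y)"
  unfolding gr_map_def gradd_def by (rule ext) (simp add: hcomp_add coset_add[OF F_add_subgroup])

lemma F_mul: "a \<in> F p \<Longrightarrow> b \<in> F q \<Longrightarrow> a * b \<in> F (p + q)"
  unfolding ratil_eq_A_Int_deg_ge using A_mul deg_ge_mul by blast

lemma F_anti: "p \<le> q \<Longrightarrow> F q \<subseteq> F p"
  unfolding ratil_eq_A_Int_deg_ge using deg_ge_anti by blast

lemma gr_map_mul:
  assumes x: "x \<in> A" and y: "y \<in> A"
  shows "gr_map (x * y) = grmul F (gr_map x) (gr_map y)"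
proof (rule ext)
  fix n
  have "grmul F (gr_map x) (gr_map y) n = coset (F (Suc n)) (\<Sum>i\<le>n. hcomp i x * hcomp (n - i) y)"
    unfolding grmul_def
  proof (rule gract_coset[where x = "\<lambda>i. hcomp i x" and y = "\<lambda>i. hcomp (n - i) y"])
    show "(a + b) * m = a * m + b * m" for a b m :: 'a by (simp add: distrib_right)
    show "a * (m + k) = a * m + a * k" for a m k :: 'a by (simp add: distrib_left)
    show "add_subgroup (F (Suc n))" "\<And>i. add_subgroup (F i)" "\<And>j. add_subgroup (F j)" using F_add_subgroup by auto
    show "\<And>i. i \<le> n \<Longrightarrow> gr_map x i = coset (F (Suc i)) (hcomp i x)" unfolding gr_map_def by simp
    show "\<And>i. i \<le> n \<Longrightarrow> gr_map y (n - i) = coset (F (Suc (n - i))) (hcomp (n - i) y)" unfolding gr_map_def by simp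
  next
    fix i a b assume i: "i \<le> n" and a: "a \<in> F (Suc i)" and b: "b \<in> coset (F (Suc (n - i))) (hcomp (n - i) y)"
    have "b - hcomp (n - i) y \<in> F (Suc (n - i))" using b unfolding mem_coset .
    then have "b - hcomp (n - i) y \<in> F (n - i)" using F_anti[of "n - i" "Suc (n - i)"] by auto
    then have "(b - hcomp (n - i) y) + hcomp (n - i) y \<in> F (n - i)"
      using add_subgroupD(2)[OF F_add_subgroup _ hcomp_in_F[OF y]] by blast
    then have "b \<in> F (n - i)" by simp
    then have "a * b \<in> F (Suc i + (n - i))" using F_mul a by blast
    then show "a * b \<in> F (Suc n)" using i by (simp add: Suc_diff_le)
  next
    fix i b assume i: "i \<le> n" and b: "b \<in> F (Suc (n - i))"
    have "hcomp i x * b \<in> F (i + Suc (n - i))" using F_mul[OF hcomp_in_F[OF x] b] .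
    then show "hcomp i x * b \<in> F (Suc n)" using i by simp
  qed
  then show "gr_map (x * y) n = grmul F (gr_map x) (gr_map y) n"
    unfolding gr_map_def by (simp add: hcomp_mul)
qed

lemma gr_map_one: "gr_map 1 = grone F"
  unfolding gr_map_def grone_def by (rule ext) (simp add: hcomp_one)

lemma gr_map_sc: "c \<in> Ov \<Longrightarrow> x \<in> A \<Longrightarrow> gr_map (sc c x) = grsmul sc F c (gr_map x)"
proof (rule ext)
  fix r assume c: "c \<in> Ov"
  have "grsmul sc F c (gr_map x) r = coset (F (Suc r)) (sc c (hcomp r x))"
    unfolding grsmul_def gr_map_def
  proof (rule additive_image_coset[OF F_add_subgroup])
    show "u \<in> F (Suc r) \<Longrightarrow> sc c u \<in> F (Suc r)" for u
      unfolding ratil_eq_A_Int_deg_ge using A_sc[OF c] deg_ge_sc by blast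
    show "sc c (u + v) = sc c u + sc c v" for u v by (rule vs_simps(4)[OF sc_vs_axioms])
  qed
  then show "gr_map (sc c x) r = grsmul sc F c (gr_map x) r"
    unfolding gr_map_def by (simp add: hcomp_sc)
qed

lemma gr_map_single: "x \<in> aa r \<Longrightarrow> gr_map x = grsingle F r x"
proof (rule ext)
  fix n assume "x \<in> aa r"
  then have "x \<in> gK r" using aa_gK by blast
  then have h: "hcomp n x = (if n = r then x else 0)" by (rule hcomp_homog)
  show "gr_map x n = grsingle F r x n"
    unfolding gr_map_def grsingle_def h by (simp add: coset_zero)
qed

end

section \<open>Tight lattices\<close>

locale graded_order_lattice = graded_order sc gK Ov A aa for sc :: "'k::field \<Rightarrow> 'a::ring_1 \<Rightarrow> 'a" and gK Ov A aa +
  fixes scm :: "'k \<Rightarrow> 'm::ab_group_add \<Rightarrow> 'm" and act :: "'a \<Rightarrow> 'm \<Rightarrow> 'm" and M :: "'m set"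
  assumes kmod_act: "kmod sc scm act" and is_lattice_M: "is_lattice Ov scm act A M"
begin

lemma scm_vs_axioms: "vs_axioms scm" using kmod_act unfolding kmod_def by blast

lemma act_one: "act 1 m = m" using kmod_act unfolding kmod_def by blast
lemma act_mul: "act (x * y) m = act x (act y m)" using kmod_act unfolding kmod_def by blast
lemma act_addl: "act (x + y) m = act x m + act y m" using kmod_act unfolding kmod_def by blast
lemma act_addr: "act x (m + n) = act x m + act x n" using kmod_act unfolding kmod_def by blast

lemma act_zerol: "act 0 m = 0" using act_addl[of 0 0 m] by simp
lemma act_zeror: "act x 0 = 0" using act_addr[of x 0 0] by simp
lemma act_negl: "act (- x) m = - act x m"
proof -
  have "act (- x) m + act x m = 0" using act_addl[of "-x" x m] act_zerol by simp
  then show ?thesis by (simp add: eq_neg_iff_add_eq_0)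
qed

lemma M_add_subgroup: "add_subgroup M"
  using is_lattice_M submod_add_subgroup[OF scm_vs_axioms _ minus_one_in_Ov] unfolding is_lattice_def by blast

lemma M_act: "x \<in> A \<Longrightarrow> m \<in> M \<Longrightarrow> act x m \<in> M"
  using is_lattice_M unfolding is_lattice_def by blast

abbreviation R :: "nat \<Rightarrow> 'm set" where "R \<equiv> radM act M"

definition rad_gens :: "nat \<Rightarrow> 'm set" where "rad_gens r = {act x m | x m. x \<in> deg_ge r}"

lemma R_eq_Int_addspan: "R r = M \<inter> addspan (rad_gens r)"
  unfolding radM_def rad_gens_def by (simp add: idpow_jrad_eq_deg_ge)

definition sumge_M :: "nat \<Rightarrow> 'm set" where
  "sumge_M r = addspan {act x m | x m. x \<in> sumge aa r \<and> m \<in> M}"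

lemma sumge_M_eq: "sumge_M r = addspan {act x m | x m. x \<in> A \<inter> deg_ge r \<and> m \<in> M}"
  unfolding sumge_M_def sumge_aa_eq ..

lemma R_add_subgroup: "add_subgroup (R r)"
  unfolding R_eq_Int_addspan by (rule add_subgroup_Int[OF M_add_subgroup add_subgroup_addspan])

lemma sumge_M_add_subgroup: "add_subgroup (sumge_M r)"
  unfolding sumge_M_def by (rule add_subgroup_addspan)

lemma R_anti: "p \<le> q \<Longrightarrow> R q \<subseteq> R p"
proof -
  assume "p \<le> q"
  then have "rad_gens q \<subseteq> rad_gens p" unfolding rad_gens_def using deg_ge_anti by blast
  then show ?thesis unfolding R_eq_Int_addspan using addspan_mono by blast
qed

lemma sumge_M_anti: "p \<le> q \<Longrightarrow> sumge_M q \<subseteq> sumge_M p"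
proof -
  assume "p \<le> q"
  then have "{act x m | x m. x \<in> A \<inter> deg_ge q \<and> m \<in> M} \<subseteq> {act x m | x m. x \<in> A \<inter> deg_ge p \<and> m \<in> M}"
    using deg_ge_anti by blast
  then show ?thesis unfolding sumge_M_eq using addspan_mono by blast
qed

lemma R_0: "R 0 = M"
proof -
  have "M \<subseteq> addspan (rad_gens 0)"
  proof
    fix m assume "m \<in> M"
    have "act 1 m \<in> rad_gens 0" unfolding rad_gens_def deg_ge_0 by blast
    then have "act 1 m \<in> addspan (rad_gens 0)" by (rule addspan.as_base)
    then show "m \<in> addspan (rad_gens 0)" by (simp add: act_one)
  qed
  then show ?thesis unfolding R_eq_Int_addspan by blast
qed

lemma M_sumge_M_0: "M \<subseteq> sumge_M 0"
proof
  fix m assume m: "m \<in> M"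
  have "act 1 m \<in> {act x m | x m. x \<in> A \<inter> deg_ge 0 \<and> m \<in> M}" using one_in_A m deg_ge_0 by blast
  then have "act 1 m \<in> addspan {act x m | x m. x \<in> A \<inter> deg_ge 0 \<and> m \<in> M}" by (rule addspan.as_base)
  then show "m \<in> sumge_M 0" unfolding sumge_M_eq by (simp add: act_one)
qed

lemma R_beyond_deg_bound: "n \<ge> deg_bound \<Longrightarrow> y \<in> R n \<Longrightarrow> y = 0"
proof -
  assume n: "n \<ge> deg_bound" and y: "y \<in> R n"
  have "rad_gens n \<subseteq> {0}"
  proof
    fix z assume "z \<in> rad_gens n"
    then obtain x m where xm: "z = act x m" "x \<in> deg_ge n" unfolding rad_gens_def by blast
    then have "x = 0" using deg_ge_beyond_deg_bound[OF n] by blast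
    then show "z \<in> {0}" using xm(1) act_zerol by simp
  qed
  then have "addspan (rad_gens n) \<subseteq> addspan {0}" by (rule addspan_mono)
  then show ?thesis using y addspan_zero_set unfolding R_eq_Int_addspan by blast
qed

lemma R_act: "a \<in> A \<inter> deg_ge p \<Longrightarrow> b \<in> R q \<Longrightarrow> act a b \<in> R (p + q)"
proof -
  assume a: "a \<in> A \<inter> deg_ge p" and b: "b \<in> R q"
  have "act a b \<in> M" using M_act a b unfolding R_eq_Int_addspan by blast
  moreover have "act a b \<in> addspan (rad_gens (p + q))"
  proof (rule addspan_map[where f = "act a"])
    show "act a (u + v) = act a u + act a v" for u v by (rule act_addr)
    show "b \<in> addspan (rad_gens q)" using b unfolding R_eq_Int_addspan by blast
    fix z assume "z \<in> rad_gens q"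
    then obtain x m where z: "z = act x m" "x \<in> deg_ge q" unfolding rad_gens_def by blast
    then have "act a z = act (a * x) m" "a * x \<in> deg_ge (p + q)" using a deg_ge_mul by (auto simp: act_mul)
    then show "act a z \<in> addspan (rad_gens (p + q))" unfolding rad_gens_def by (blast intro: addspan.as_base)
  qed
  ultimately show ?thesis unfolding R_eq_Int_addspan by blast
qed

lemma sumge_M_act: "a \<in> A \<inter> deg_ge p \<Longrightarrow> b \<in> sumge_M q \<Longrightarrow> act a b \<in> sumge_M (p + q)"
proof -
  assume a: "a \<in> A \<inter> deg_ge p" and b: "b \<in> sumge_M q"
  show ?thesis unfolding sumge_M_eq
  proof (rule addspan_map[where f = "act a"])
    show "act a (u + v) = act a u + act a v" for u v by (rule act_addr)
    show "b \<in> addspan {act x m | x m. x \<in> A \<inter> deg_ge q \<and> m \<in> M}" using b unfolding sumge_M_eq .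
    fix z assume "z \<in> {act x m | x m. x \<in> A \<inter> deg_ge q \<and> m \<in> M}"
    then obtain x m where z: "z = act x m" "x \<in> A \<inter> deg_ge q" "m \<in> M" by blast
    then have "act a z = act (a * x) m" "a * x \<in> A \<inter> deg_ge (p + q)" using a deg_ge_mul A_mul by (auto simp: act_mul)
    then show "act a z \<in> addspan {act x m | x m. x \<in> A \<inter> deg_ge (p + q) \<and> m \<in> M}"
      using z(3) by (blast intro: addspan.as_base)
  qed
qed

lemma sumge_M_subset_R: "sumge_M r \<subseteq> R r"
  unfolding sumge_M_eq
proof (rule addspan_sub[OF R_add_subgroup], rule subsetI)
  fix z assume "z \<in> {act x m | x m. x \<in> A \<inter> deg_ge r \<and> m \<in> M}"
  then obtain x m where z: "z = act x m" "x \<in> A \<inter> deg_ge r" "m \<in> M" by blast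
  have "z \<in> M" using M_act z by blast
  moreover have "z \<in> rad_gens r" unfolding rad_gens_def using z by blast
  ultimately show "z \<in> R r" unfolding R_eq_Int_addspan by (blast intro: addspan.as_base)
qed

lemma gract_R_coset:
  assumes xs: "\<And>i. i \<le> n \<Longrightarrow> xs i \<in> F i" "\<And>i. i \<le> n \<Longrightarrow> c i = coset (F (Suc i)) (xs i)"
    and ys: "\<And>j. j \<le> n \<Longrightarrow> ys j \<in> R j" "\<And>j. j \<le> n \<Longrightarrow> d j = coset (R (Suc j)) (ys j)"
  shows "gract act F R c d n = coset (R (Suc n)) (\<Sum>i\<le>n. act (xs i) (ys (n - i)))"
proof (rule gract_coset[where x = xs and y = "\<lambda>i. ys (n - i)"])
  show "act (a + b) m = act a m + act b m" for a b m by (rule act_addl)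
  show "act a (m + k) = act a m + act a k" for a m k by (rule act_addr)
  show "add_subgroup (R (Suc n))" "\<And>i. add_subgroup (F i)" "\<And>j. add_subgroup (R j)" using R_add_subgroup F_add_subgroup by auto
  show "\<And>i. i \<le> n \<Longrightarrow> c i = coset (F (Suc i)) (xs i)" by (rule xs(2))
  show "\<And>i. i \<le> n \<Longrightarrow> d (n - i) = coset (R (Suc (n - i))) (ys (n - i))" using ys(2) by simp
next
  fix i a b assume i: "i \<le> n" and a: "a \<in> F (Suc i)" and b: "b \<in> coset (R (Suc (n - i))) (ys (n - i))"
  have "b - ys (n - i) \<in> R (Suc (n - i))" using b unfolding mem_coset .
  then have "b - ys (n - i) \<in> R (n - i)" using R_anti[of "n - i" "Suc (n - i)"] by auto
  moreover have yR: "ys (n - i) \<in> R (n - i)" using ys(1)[of "n - i"] by simp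
  ultimately have "(b - ys (n - i)) + ys (n - i) \<in> R (n - i)"
    using add_subgroupD(2)[OF R_add_subgroup] by blast
  then have "b \<in> R (n - i)" by simp
  moreover have "a \<in> A \<inter> deg_ge (Suc i)" using a unfolding ratil_eq_A_Int_deg_ge .
  ultimately have "act a b \<in> R (Suc i + (n - i))" using R_act by blast
  then show "act a b \<in> R (Suc n)" using i by (simp add: Suc_diff_le)
next
  fix i b assume i: "i \<le> n" and b: "b \<in> R (Suc (n - i))"
  have "xs i \<in> A \<inter> deg_ge i" using xs(1)[OF i] unfolding ratil_eq_A_Int_deg_ge .
  then have "act (xs i) b \<in> R (i + Suc (n - i))" using R_act b by blast
  then show "act (xs i) b \<in> R (Suc n)" using i by simp
qed

lemma sum_in_R:
  assumes "\<And>i. i \<le> n \<Longrightarrow> xs i \<in> F i" "\<And>j. j \<le> n \<Longrightarrow> ys j \<in> R j"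
  shows "(\<Sum>i\<le>n. act (xs i) (ys (n - i))) \<in> R n"
proof (rule add_subgroup_sum[OF R_add_subgroup], rule ballI)
  fix i assume "i \<in> {..n}"
  then have i: "i \<le> n" by simp
  have "xs i \<in> A \<inter> deg_ge i" using assms(1)[OF i] unfolding ratil_eq_A_Int_deg_ge .
  then have "act (xs i) (ys (n - i)) \<in> R (i + (n - i))" using R_act assms(2) by simp
  then show "act (xs i) (ys (n - i)) \<in> R n" using i by simp
qed

lemma sum_in_sumge_M:
  assumes "\<And>i. i \<le> n \<Longrightarrow> xs i \<in> F i" "\<And>j. j \<le> n \<Longrightarrow> ys j \<in> sumge_M j"
  shows "(\<Sum>i\<le>n. act (xs i) (ys (n - i))) \<in> sumge_M n"
proof (rule add_subgroup_sum[OF sumge_M_add_subgroup], rule ballI)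
  fix i assume "i \<in> {..n}"
  then have i: "i \<le> n" by simp
  have "xs i \<in> A \<inter> deg_ge i" using assms(1)[OF i] unfolding ratil_eq_A_Int_deg_ge .
  then have "act (xs i) (ys (n - i)) \<in> sumge_M (i + (n - i))" using sumge_M_act assms(2) by simp
  then show "act (xs i) (ys (n - i)) \<in> sumge_M n" using i by simp
qed

lemma R_grcarI: "\<forall>r. \<exists>y\<in>R r. c r = coset (R (Suc r)) y \<Longrightarrow> c \<in> grcar R"
  by (rule grcarI[where N = deg_bound]) (use R_beyond_deg_bound in auto)

abbreviation gr_deg0 :: "(nat \<Rightarrow> 'm set) set" where
  "gr_deg0 \<equiv> {d \<in> grcar R. \<forall>n>0. d n = R (Suc n)}"

lemma grspan_deg0_subset_grcar: "d \<in> grspan act F R gr_deg0 \<Longrightarrow> d \<in> grcar R"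
proof (induction rule: grspan.induct)
  case (gs_base d) then show ?case by blast
next
  case gs_zero
  show ?case unfolding grzero_def
  proof (rule R_grcarI, rule allI)
    fix r
    have "R (Suc r) = coset (R (Suc r)) 0" by (simp add: coset_zero)
    then show "\<exists>y\<in>R r. R (Suc r) = coset (R (Suc r)) y" using add_subgroupD(1)[OF R_add_subgroup] by blast
  qed
next
  case (gs_add c d)
  obtain yc where yc: "\<And>r. yc r \<in> R r" "\<And>r. c r = coset (R (Suc r)) (yc r)"
    using grcar_reps[OF gs_add.IH(1)] by blast
  obtain yd where yd: "\<And>r. yd r \<in> R r" "\<And>r. d r = coset (R (Suc r)) (yd r)"
    using grcar_reps[OF gs_add.IH(2)] by blast
  have "gradd R c d = (\<lambda>r. coset (R (Suc r)) (yc r + yd r))"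
  proof -
    have "c = (\<lambda>r. coset (R (Suc r)) (yc r))" "d = (\<lambda>r. coset (R (Suc r)) (yd r))"
      using yc(2) yd(2) by auto
    then show ?thesis using gradd_coset[where G = R, OF R_add_subgroup] by simp
  qed
  then show ?case using add_subgroupD(2)[OF R_add_subgroup yc(1) yd(1)] by (intro R_grcarI) auto
next
  case (gs_act c d)
  obtain xs where xs: "\<And>r. xs r \<in> F r" "\<And>r. c r = coset (F (Suc r)) (xs r)"
    using grcar_reps[OF gs_act.hyps(1)] by blast
  obtain ys where ys: "\<And>r. ys r \<in> R r" "\<And>r. d r = coset (R (Suc r)) (ys r)"
    using grcar_reps[OF gs_act.IH] by blast
  have "\<forall>n. \<exists>y\<in>R n. gract act F R c d n = coset (R (Suc n)) y"
  proof
    fix n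
    show "\<exists>y\<in>R n. gract act F R c d n = coset (R (Suc n)) y"
      using gract_R_coset[of n xs c ys d] sum_in_R[of n xs ys] xs ys by blast
  qed
  then show ?case by (rule R_grcarI)
qed

lemma grsingle_R_in_grcar: "m \<in> R k \<Longrightarrow> grsingle R k m \<in> grcar R"
  unfolding grsingle_coset
  by (rule R_grcarI) (use add_subgroupD(1)[OF R_add_subgroup] in auto)

lemma gract_grsingle:
  assumes x: "x \<in> F i" and m: "m \<in> R j"
  shows "gract act F R (grsingle F i x) (grsingle R j m) = grsingle R (i + j) (act x m)"
proof (rule ext)
  fix n
  define xs where "xs l = (if l = i then x else 0)" for l
  define ys where "ys l = (if l = j then m else 0)" for l
  have "gract act F R (grsingle F i x) (grsingle R j m) n
      = coset (R (Suc n)) (\<Sum>l\<le>n. act (xs l) (ys (n - l)))"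
    by (rule gract_R_coset)
      (use x m add_subgroupD(1)[OF F_add_subgroup] add_subgroupD(1)[OF R_add_subgroup] in
        \<open>auto simp: xs_def ys_def grsingle_coset\<close>)
  also have "(\<Sum>l\<le>n. act (xs l) (ys (n - l))) = (if n = i + j then act x m else 0)"
    by (rule sum_single_term[where k = i]) (auto simp: xs_def ys_def act_zerol act_zeror)
  finally show "gract act F R (grsingle F i x) (grsingle R j m) n = grsingle R (i + j) (act x m) n"
    unfolding grsingle_coset by simp
qed

lemma grsingle_sumge_M_in_grspan:
  assumes "m \<in> sumge_M k"
  shows "grsingle R k m \<in> grspan act F R gr_deg0"
  using assms unfolding sumge_M_eq
proof (induction rule: addspan.induct)
  case as_zero
  have "grsingle R k 0 = grzero R" unfolding grsingle_coset grzero_def by (rule ext) (simp add: coset_zero)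
  then show ?case by (simp add: grspan.gs_zero)
next
  case (as_base z)
  then obtain x m where z: "z = act x m" "x \<in> F k" "m \<in> M" unfolding ratil_eq_A_Int_deg_ge by blast
  have m: "m \<in> R 0" using z(3) R_0 by simp
  have "grsingle R 0 m \<in> grspan act F R gr_deg0"
    using grsingle_R_in_grcar[OF m] by (intro grspan.gs_base) (simp add: grsingle_def)
  then have "gract act F R (grsingle F k x) (grsingle R 0 m) \<in> grspan act F R gr_deg0"
    by (rule grspan.gs_act[OF grsingle_F_in_grcar[OF z(2)]])
  then show ?case using gract_grsingle[OF z(2) m] z(1) by simp
next
  case (as_add a b)
  have "gradd R (grsingle R k a) (grsingle R k b) = grsingle R k (a + b)"
    unfolding grsingle_coset gradd_coset[where G = R, OF R_add_subgroup] by (rule ext) simp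
  then show ?case using grspan.gs_add[OF as_add.IH] by simp
next
  case (as_neg a)
  have a: "a \<in> R k" using as_neg.hyps sumge_M_subset_R unfolding sumge_M_eq by blast
  have minus_one: "-1 \<in> F 0"
    unfolding ratil_eq_A_Int_deg_ge deg_ge_0 using add_subgroupD(3)[OF A_add_subgroup one_in_A] by simp
  show ?case
    using grspan.gs_act[OF grsingle_F_in_grcar[OF minus_one] as_neg.IH]
      gract_grsingle[OF minus_one a] by (simp add: act_negl act_one)
qed

lemma truncation_in_grspan_deg0:
  assumes H: "\<forall>r. sumge_M r = R r" and ys: "\<And>r. ys r \<in> R r"
  shows "(\<lambda>r. coset (R (Suc r)) (if r < k then ys r else 0)) \<in> grspan act F R gr_deg0"
proof (induction k)
  case 0
  have "(\<lambda>r. coset (R (Suc r)) (if r < 0 then ys r else 0)) = grzero R"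
    unfolding grzero_def by (rule ext) (simp add: coset_zero)
  then show ?case by (simp add: grspan.gs_zero)
next
  case (Suc k)
  have single: "grsingle R k (ys k) \<in> grspan act F R gr_deg0"
    using grsingle_sumge_M_in_grspan ys H by blast
  have eq: "gradd R (\<lambda>r. coset (R (Suc r)) (if r < k then ys r else 0)) (grsingle R k (ys k))
      = (\<lambda>r. coset (R (Suc r)) (if r < Suc k then ys r else 0))"
    unfolding grsingle_coset gradd_coset[where G = R, OF R_add_subgroup] by (rule ext) auto
  show ?case using grspan.gs_add[OF Suc single] unfolding eq .
qed

lemma grspan_deg0_eq_if_sumge_M_eq_R:
  assumes H: "\<forall>r. sumge_M r = R r"
  shows "grspan act F R gr_deg0 = grcar R"
proof
  show "grcar R \<subseteq> grspan act F R gr_deg0"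
  proof
    fix c assume "c \<in> grcar R"
    then obtain ys where ys: "\<And>r. ys r \<in> R r" "\<And>r. c r = coset (R (Suc r)) (ys r)"
      using grcar_reps by blast
    have "c r = coset (R (Suc r)) (if r < deg_bound then ys r else 0)" for r
      using ys(2)[of r] R_beyond_deg_bound[OF _ ys(1)[of r]] by (cases "r < deg_bound") auto
    then have "c = (\<lambda>r. coset (R (Suc r)) (if r < deg_bound then ys r else 0))" by blast
    then show "c \<in> grspan act F R gr_deg0" using truncation_in_grspan_deg0[OF H ys(1)] by simp
  qed
qed (use grspan_deg0_subset_grcar in blast)

lemma grspan_deg0_reps:
  "d \<in> grspan act F R gr_deg0 \<Longrightarrow> \<forall>n. \<exists>y\<in>sumge_M n. d n = coset (R (Suc n)) y"
proof (induction rule: grspan.induct)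
  case (gs_base d)
  then obtain ys where ys: "\<And>r. ys r \<in> R r" "\<And>r. d r = coset (R (Suc r)) (ys r)"
    using grcar_reps by blast
  have "d n = coset (R (Suc n)) (if n = 0 then ys 0 else 0)" for n
    using gs_base ys(2) by (auto simp: coset_zero)
  moreover have "(if n = 0 then ys 0 else 0) \<in> sumge_M n" for n
    using ys(1)[of 0] R_0 M_sumge_M_0 add_subgroupD(1)[OF sumge_M_add_subgroup] by auto
  ultimately show ?case by blast
next
  case gs_zero
  show ?case
    unfolding grzero_def using add_subgroupD(1)[OF sumge_M_add_subgroup] coset_zero by metis
next
  case (gs_add c d)
  show ?case
  proof
    fix n
    obtain y1 where y1: "y1 \<in> sumge_M n" "c n = coset (R (Suc n)) y1" using gs_add.IH(1) by blast
    obtain y2 where y2: "y2 \<in> sumge_M n" "d n = coset (R (Suc n)) y2" using gs_add.IH(2) by blast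
    have "gradd R c d n = coset (R (Suc n)) (y1 + y2)"
      unfolding gradd_def y1(2) y2(2) by (rule coset_add[OF R_add_subgroup])
    then show "\<exists>y\<in>sumge_M n. gradd R c d n = coset (R (Suc n)) y"
      using add_subgroupD(2)[OF sumge_M_add_subgroup y1(1) y2(1)] by blast
  qed
next
  case (gs_act c d)
  obtain xs where xs: "\<And>r. xs r \<in> F r" "\<And>r. c r = coset (F (Suc r)) (xs r)"
    using grcar_reps[OF gs_act.hyps(1)] by blast
  have "\<forall>r. \<exists>y. y \<in> sumge_M r \<and> d r = coset (R (Suc r)) y" using gs_act.IH by blast
  then have "\<exists>ys. \<forall>r. ys r \<in> sumge_M r \<and> d r = coset (R (Suc r)) (ys r)" by (rule choice)
  then obtain ys where ys: "\<And>r. ys r \<in> sumge_M r \<and> d r = coset (R (Suc r)) (ys r)" by blast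
  show ?case
  proof
    fix n
    have ysR: "\<And>r. ys r \<in> R r" using ys sumge_M_subset_R by blast
    have "gract act F R c d n = coset (R (Suc n)) (\<Sum>i\<le>n. act (xs i) (ys (n - i)))"
      by (rule gract_R_coset) (use xs ys ysR in auto)
    moreover have "(\<Sum>i\<le>n. act (xs i) (ys (n - i))) \<in> sumge_M n"
      by (rule sum_in_sumge_M) (use xs ys in auto)
    ultimately show "\<exists>y\<in>sumge_M n. gract act F R c d n = coset (R (Suc n)) y" by blast
  qed
qed

lemma R_approx_by_sumge_M:
  assumes "grspan act F R gr_deg0 = grcar R" and m: "m \<in> R r"
  obtains y where "y \<in> sumge_M r" "m - y \<in> R (Suc r)"
proof -
  have "grsingle R r m \<in> grspan act F R gr_deg0" using grsingle_R_in_grcar[OF m] assms(1) by simp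
  then obtain y where y: "y \<in> sumge_M r" "grsingle R r m r = coset (R (Suc r)) y"
    using grspan_deg0_reps by blast
  then have "coset (R (Suc r)) m = coset (R (Suc r)) y" unfolding grsingle_def by simp
  then have "m - y \<in> R (Suc r)" using coset_eq_iff[OF R_add_subgroup] by blast
  then show ?thesis using y(1) that by blast
qed

lemma sumge_M_eq_R_if_grspan_deg0_eq:
  assumes H: "grspan act F R gr_deg0 = grcar R"
  shows "sumge_M r = R r"
proof
  show "R r \<subseteq> sumge_M r"
  proof (cases "r \<le> deg_bound")
    case True
    then show ?thesis
    proof (induction rule: inc_induct)
      case base
      show ?case using R_beyond_deg_bound add_subgroupD(1)[OF sumge_M_add_subgroup] by blast
    next
      case (step n)
      show ?case
      proof
        fix m assume "m \<in> R n"
        then obtain y where y: "y \<in> sumge_M n" "m - y \<in> R (Suc n)"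
          using R_approx_by_sumge_M[OF H] by blast
        then have "m - y \<in> sumge_M n" using step.IH sumge_M_anti[of n "Suc n"] by auto
        then have "(m - y) + y \<in> sumge_M n" using add_subgroupD(2)[OF sumge_M_add_subgroup _ y(1)] by blast
        then show "m \<in> sumge_M n" by simp
      qed
    qed
  next
    case False
    show ?thesis
    proof
      fix m assume "m \<in> R r"
      then show "m \<in> sumge_M r"
        using False R_beyond_deg_bound[of r m] add_subgroupD(1)[OF sumge_M_add_subgroup] by simp
    qed
  qed
qed (rule sumge_M_subset_R)

lemma tightness_criteria:
  "(tight_lattice act A M \<longleftrightarrow> (\<forall>r. sumge_M r = R r))
   \<and> ((\<forall>r. sumge_M r = R r) \<longleftrightarrow> grspan act F R gr_deg0 = grcar R)"
proof -
  have "tight_lattice act A M \<longleftrightarrow> (\<forall>r. sumge_M r = R r)"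
    unfolding tight_lattice_def sumge_M_def sumge_aa_eq ratil_eq_A_Int_deg_ge by (auto simp: eq_commute)
  then show ?thesis
    using grspan_deg0_eq_if_sumge_M_eq_R sumge_M_eq_R_if_grspan_deg0_eq by blast
qed

end

theorem proposition5p2:
  fixes Ov :: "'k::field set" and sc :: "'k \<Rightarrow> 'a::ring_1 \<Rightarrow> 'a"
    and A :: "'a set" and gK aa :: "nat \<Rightarrow> 'a set"
  assumes "dvr Ov"
    and "kalg sc"
    and "1 \<in> A" and "\<forall>x\<in>A. \<forall>y\<in>A. x * y \<in> A"
    and "\<exists>B. finite B \<and> B \<subseteq> A \<and> lin_indep sc B \<and> A = lspan sc Ov B \<and> lspan sc UNIV B = UNIV"
    and "tight_grading sc gK"
    and "\<forall>r. submod sc Ov (aa r)" and "graded_ds aa A"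
    and "\<forall>i j. \<forall>x\<in>aa i. \<forall>y\<in>aa j. x * y \<in> aa (i + j)" and "1 \<in> aa 0"
    and "\<forall>r. lspan sc UNIV (aa r) = gK r"
  shows "(\<forall>r. aa r = A \<inter> gK r)
     \<and> (\<forall>r. sumge aa r = ratil A r)
     \<and> (\<exists>\<phi>. bij_betw \<phi> A (grcar (ratil A))
          \<and> (\<forall>x\<in>A. \<forall>y\<in>A. \<phi> (x + y) = gradd (ratil A) (\<phi> x) (\<phi> y))
          \<and> (\<forall>x\<in>A. \<forall>y\<in>A. \<phi> (x * y) = grmul (ratil A) (\<phi> x) (\<phi> y))
          \<and> \<phi> 1 = grone (ratil A)
          \<and> (\<forall>c\<in>Ov. \<forall>x\<in>A. \<phi> (sc c x) = grsmul sc (ratil A) c (\<phi> x))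
          \<and> (\<forall>r. \<forall>x\<in>aa r. \<phi> x = grsingle (ratil A) r x))
     \<and> (\<forall>(scm :: 'k \<Rightarrow> 'm::ab_group_add \<Rightarrow> 'm) act M.
          kmod sc scm act \<and> is_lattice Ov scm act A M \<longrightarrow>
            (tight_lattice act A M
               \<longleftrightarrow> (\<forall>r. addspan {act x m | x m. x \<in> sumge aa r \<and> m \<in> M} = radM act M r))
          \<and> ((\<forall>r. addspan {act x m | x m. x \<in> sumge aa r \<and> m \<in> M} = radM act M r)
               \<longleftrightarrow> grspan act (ratil A) (radM act M)
                      {d \<in> grcar (radM act M). \<forall>n>0. d n = radM act M (Suc n)}
                    = grcar (radM act M)))"
proof -
  interpret graded_order sc gK Ov A aa
    using assms by unfold_locales blast+
  show ?thesis
  proof (intro conjI exI[of _ gr_map] allI ballI impI)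
    fix scm :: "'k \<Rightarrow> 'm::ab_group_add \<Rightarrow> 'm" and act M
    assume "kmod sc scm act \<and> is_lattice Ov scm act A M"
    then interpret graded_order_lattice sc gK Ov A aa scm act M
      by unfold_locales auto
    show "tight_lattice act A M
        \<longleftrightarrow> (\<forall>r. addspan {act x m | x m. x \<in> sumge aa r \<and> m \<in> M} = radM act M r)"
      "(\<forall>r. addspan {act x m | x m. x \<in> sumge aa r \<and> m \<in> M} = radM act M r)
        \<longleftrightarrow> grspan act (ratil A) (radM act M) gr_deg0 = grcar (radM act M)"
      using tightness_criteria unfolding sumge_M_def by blast+
  qed (use aa_eq_A_Int_gK sumge_aa_eq_ratil gr_map_bij gr_map_add gr_map_mul gr_map_one gr_map_sc
      gr_map_single in auto)
qed

end
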